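(* Assume $\epsilon=0$ and the following hold: (A1) for every $z\in\mathcal{Z}$ the map $x\mapsto l(x,z)$ is $\gamma$-strongly convex on $\mathbb{R}^n$ for some $\gamma>0$; (A2) for every $x$, $\|\nabla_x l(x,z)-\nabla_x l(x,z')\|\le\beta_z\|z-z'\|$ for all $z,z'\in\mathcal{Z}$, and for every $z\in\mathcal{Z}$, $\|\nabla_x l(x,z)-\nabla_x l(y,z)\|\le\beta_x\|x-y\|$ for all $x,y$; (A3) $W_1(\mathcal{D}(x),\mathcal{D}(y))\le\epsilon\|x-y\|$ and $W_1(\mathcal{D}_g(x),\mathcal{D}_g(y))\le\epsilon_g\|x-y\|$ for all $x,y$; (A4) $G$ has full row rank. Let $\{(x_t,\lambda_t)\}$ be the sequence generated by Repeated Dual Ascent with step size $\eta>0$. If $$\epsilon_g\Big(1+\frac{\|G\|_2^2}{\gamma^2}\Big)<2\gamma_d \quad\text{and}\quad \eta<\frac{2\gamma_d-\epsilon_g\big(1+\frac{\|G\|_2^2}{\gamma^2}\big)}{L_d^2+\epsilon_gL_d+\epsilon_g^2\frac{\|G\|_2^2}{\gamma^2}+\epsilon_g^2L_d\frac{\|G\|_2^2}{\gamma^2}},$$ then for all $t\ge1$ $$\|\lambda_{t+1}-\lambda_s^*\|^2\le\kappa_3^t\|\lambda_1-\lambda_s^*\|^2 \quad\text{and}\quad \|x_{t+1}-x_s\|^2\le\kappa_3^{t-1}\frac{\|G\|_2^2}{\gamma^2}\|\lambda_1-\lambda_s^*\|^2,$$ where $\kappa_3=1-2\eta\gamma_d+\eta^2L_d^2+\epsilon_g\eta+\epsilon_gL_d\eta^2+\frac{\|G\|_2^2}{\gamma^2}\big(\epsilon_g^2\eta^2+\epsilon_g\eta+\epsilon_gL_d\eta^2\big)$,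 $x_s$ is the constrained equilibrium point, and $\lambda_s^*$ is the optimal dual variable, i.e. the maximizer over $\lambda\ge0$ of $d_{x_s}(\lambda)$.
   Context: Let $G\in\mathbb{R}^{d_w\times n}$ and let $l:\mathbb{R}^n\times\mathbb{R}^{d_z}\to\mathbb{R}$ be twice continuously differentiable. Let $\mathcal{Z}\subseteq\mathbb{R}^{d_z}$, $\mathcal{W}\subseteq\mathbb{R}^{d_w}$, and let $\mathcal{D},\mathcal{D}_g$ be maps assigning to each $x\in\mathbb{R}^n$ probability distributions $\mathcal{D}(x)$ on $\mathcal{Z}$ and $\mathcal{D}_g(x)$ on $\mathcal{W}$ (with measurability so that all expectations are well defined). For $x,x'\in\mathbb{R}^n$ put $f_{x'}(x)=\mathbb{E}_{z\sim\mathcal{D}(x')}[l(x,z)]$ and $\xi(x')=\mathbb{E}_{w\sim\mathcal{D}_g(x')}[w]\in\mathbb{R}^{d_w}$; vector inequalities are componentwise. A constrained equilibrium point is a vector $x_s$ with $x_s=\arg\min_x\{f_{x_s}(x): Gx\le\xi(x_s)\}$. Define the Lagrangian $L_{x'}(x,\lambda)=f_{x'}(x)+\lambda^{\mathrm T}(Gx-\xi(x'))$ and the dual function $d_{x'}(\lambda)=\min_x L_{x'}(x,\lambda)$. Repeated Dual Ascent (RDA): given initial $\lambda_1\in\mathbb{R}^{d_w}$, $x_0\in\mathbb{R}^n$ and step size $\eta>0$, for $t=1,2,\dots$ set $x_t=\arg\min_x L_{x_{t-1}}(x,\lambda_t)$, $\bar y_t=\arg\min_x L_{x_t}(x,\lambda_t)$,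 and $\lambda_{t+1}=[\lambda_t+\eta(G\bar y_t-\xi(x_t))]_+$, where $[a]_+=\max\{a,0\}$ componentwise. Set $\gamma_d=\lambda_{\min}(GG^{\mathrm T})/\beta_x$ and $L_d=\|G\|_2^2/\gamma$. $W_1$ is the 1-Wasserstein distance, $\|\cdot\|$ the Euclidean norm, $\|G\|_2$ the largest singular value of $G$, $\lambda_{\min}$ the smallest eigenvalue. *)

theory Defs
  imports "HOL-Analysis.Analysis" "HOL-Probability.Probability"
begin

definition strongly_convex :: "real \<Rightarrow> ('a::real_normed_vector \<Rightarrow> real) \<Rightarrow> bool" where
  "strongly_convex \<gamma> f \<longleftrightarrow>
     (\<forall>x y. \<forall>t::real. 0 \<le> t \<and> t \<le> 1 \<longrightarrow>
        f (t *\<^sub>R x + (1 - t) *\<^sub>R y) \<le> t * f x + (1 - t) * f y - \<gamma> / 2 * t * (1 - t) * (norm (x - y))\<^sup>2)"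

definition C2 :: "('a::euclidean_space \<Rightarrow> real) \<Rightarrow> bool" where
  "C2 f \<longleftrightarrow> (\<exists>(Df :: 'a \<Rightarrow> 'a \<Rightarrow>\<^sub>L real) (Df2 :: 'a \<Rightarrow> 'a \<Rightarrow>\<^sub>L ('a \<Rightarrow>\<^sub>L real)).
      (\<forall>p. (f has_derivative blinfun_apply (Df p)) (at p)) \<and>
      (\<forall>p. (Df has_derivative blinfun_apply (Df2 p)) (at p)) \<and>
      continuous_on UNIV Df2)"

text \<open>1-Wasserstein distance, via the Kantorovich--Rubinstein (dual) formula:
  supremum over 1-Lipschitz test functions of the difference of expectations.\<close>
definition W1 :: "'a::{metric_space, second_countable_topology} measure \<Rightarrow> 'a measure \<Rightarrow> ereal" where
  "W1 \<mu> \<nu> = (SUP g \<in> {g :: 'a \<Rightarrow> real. 1-lipschitz_on UNIV g \<and> integrable \<mu> g \<and> integrable \<nu> g}.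
               ereal \<bar>(\<integral>z. g z \<partial>\<mu>) - (\<integral>z. g z \<partial>\<nu>)\<bar>)"

definition eigvals :: "real^'m^'m \<Rightarrow> real set" where
  "eigvals A = {c. \<exists>v. v \<noteq> 0 \<and> A *v v = c *\<^sub>R v}"

definition lambda_min :: "real^'m^'m \<Rightarrow> real" where
  "lambda_min A = Min (eigvals A)"

definition lambda_max :: "real^'m^'m \<Rightarrow> real" where
  "lambda_max A = Max (eigvals A)"

definition sigma_max :: "real^'n^'m \<Rightarrow> real" where
  "sigma_max G = sqrt (lambda_max (transpose G ** G))"

definition pos_part :: "real^'m \<Rightarrow> real^'m" where
  "pos_part a = (\<chi> i. max (a $ i) 0)"

end

theory Submission
  imports Defs
begin

(* With epsilon = 0 the decision does not move the loss distribution, so every Lagrangian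
   L_{x'}(., lambda) is one expected loss F plus the tilt (G^T lambda) . x and a constant: both RDA
   minimizations return the minimizer y(lambda) of the tilted F, and RDA iterates the map
   T(lambda) = [lambda + eta (G y(lambda) - xi(y(lambda)))]_+, whose fixed point is the optimal
   multiplier (dual optimality yields the KKT conditions).  Since F is gamma-strongly convex with
   beta_x-Lipschitz gradient, lambda |-> G y(lambda) is strongly monotone and co-coercive; this gives
   the descent term -gamma_d |lambda - lambda_s^*|^2, the constraint mean xi moves by at most
   eps_g |y(lambda) - x_s|, and expanding |T(lambda) - lambda_s^*|^2 produces the factor kappa_3. *)

section \<open>Spectral bounds\<close>

lemma quadratic_nonneg_imp_linear_coeff_zero:
  fixes c e :: real
  assumes "\<And>t. 0 \<le> 2 * t * c + t\<^sup>2 * e"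
  shows "c = 0"
proof (rule ccontr)
  assume "c \<noteq> 0"
  define t where "t = - c / (\<bar>e\<bar> + 1)"
  have pos: "0 < \<bar>e\<bar> + 1"
    by simp
  have "t\<^sup>2 * e \<le> t\<^sup>2 * \<bar>e\<bar>"
    by (simp add: mult_left_mono)
  also have "\<dots> = c\<^sup>2 * \<bar>e\<bar> / (\<bar>e\<bar> + 1)\<^sup>2"
    by (simp add: t_def power_divide)
  also have "\<dots> \<le> c\<^sup>2 / (\<bar>e\<bar> + 1)"
    using pos by (simp add: power2_eq_square divide_simps mult_left_mono)
  finally have "t\<^sup>2 * e \<le> c\<^sup>2 / (\<bar>e\<bar> + 1)" .
  moreover have "2 * t * c = - 2 * (c\<^sup>2 / (\<bar>e\<bar> + 1))"
    by (simp add: t_def power2_eq_square)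
  moreover have "0 < c\<^sup>2 / (\<bar>e\<bar> + 1)"
    using \<open>c \<noteq> 0\<close> pos by simp
  ultimately show False
    using assms[of t] by linarith
qed

lemma inner_transpose_mult: "(transpose B *v v) \<bullet> x = v \<bullet> (B *v x)"
  for B :: "real^'a^'b"
  by (simp add: dot_lmul_matrix)

lemma inner_transpose_mult_self:
  fixes B :: "real^'a^'b"
  shows "v \<bullet> ((transpose B ** B) *v v) = (norm (B *v v))\<^sup>2"
  by (simp add: power2_norm_eq_inner matrix_vector_mul_assoc[symmetric] inner_commute[of v]
      inner_transpose_mult del: transpose_matrix_vector)

lemma psd_form_zero_imp_kernel:
  fixes A :: "real^'a^'a"
  assumes sym: "transpose A = A" and psd: "\<And>v. 0 \<le> v \<bullet> (A *v v)"
    and zero: "v0 \<bullet> (A *v v0) = 0"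
  shows "A *v v0 = 0"
proof -
  have "w \<bullet> (A *v v0) = 0" for w
  proof (rule quadratic_nonneg_imp_linear_coeff_zero)
    fix t :: real
    have "v0 \<bullet> (A *v w) = w \<bullet> (A *v v0)"
      by (metis sym inner_commute inner_transpose_mult)
    then have "(v0 + t *\<^sub>R w) \<bullet> (A *v (v0 + t *\<^sub>R w))
        = v0 \<bullet> (A *v v0) + 2 * t * (w \<bullet> (A *v v0)) + t\<^sup>2 * (w \<bullet> (A *v w))"
      by (simp add: matrix_vector_right_distrib matrix_vector_mult_scaleR inner_add_left
          inner_add_right algebra_simps power2_eq_square)
    then show "0 \<le> 2 * t * (w \<bullet> (A *v v0)) + t\<^sup>2 * (w \<bullet> (A *v w))"
      using psd[of "v0 + t *\<^sub>R w"] zero by simp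
  qed
  then show ?thesis
    by (metis inner_eq_zero_iff)
qed

lemma mat_mult_vector: "mat m *v v = m *\<^sub>R (v :: real^'a)"
  by (simp add: vec_eq_iff matrix_vector_mult_def mat_def mult_delta_left sum.delta)

lemma norm_mult_sq_eq_normalized:
  fixes B :: "real^'a^'b"
  shows "(norm (B *v v))\<^sup>2 = (norm v)\<^sup>2 * (norm (B *v (v /\<^sub>R norm v)))\<^sup>2"
  by (cases "v = 0") (simp_all add: matrix_vector_mult_scaleR power_mult_distrib power_inverse)

text \<open>The sign \<open>s\<close> selects a minimum (\<open>s = 1\<close>) or a maximum (\<open>s = -1\<close>) of the Rayleigh quotient.\<close>

lemma eigval_of_rayleigh_extremum:
  fixes B :: "real^'a^'b"
  assumes "s \<noteq> 0" and v0: "v0 \<in> sphere 0 1"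
    and extremal: "\<forall>u \<in> sphere 0 1. s * (norm (B *v v0))\<^sup>2 \<le> s * (norm (B *v u))\<^sup>2"
  defines "m \<equiv> (norm (B *v v0))\<^sup>2"
  shows "m \<in> eigvals (transpose B ** B)"
    and "s * (m * (norm v)\<^sup>2) \<le> s * (norm (B *v v))\<^sup>2"
proof -
  show bound: "s * (m * (norm v)\<^sup>2) \<le> s * (norm (B *v v))\<^sup>2" for v
  proof (cases "v = 0")
    case False
    then have "s * m \<le> s * (norm (B *v (v /\<^sub>R norm v)))\<^sup>2"
      using extremal by (simp add: m_def)
    then have "(norm v)\<^sup>2 * (s * m) \<le> (norm v)\<^sup>2 * (s * (norm (B *v (v /\<^sub>R norm v)))\<^sup>2)"
      by (rule mult_left_mono) simp
    then show ?thesis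
      by (subst norm_mult_sq_eq_normalized) (simp only: ac_simps)
  qed simp
  define A where "A = s *\<^sub>R (transpose B ** B - mat m)"
  have form: "v \<bullet> (A *v v) = s * ((norm (B *v v))\<^sup>2 - m * (norm v)\<^sup>2)" for v
    by (simp add: A_def matrix_vector_mult_diff_rdistrib mat_mult_vector inner_diff_right
        inner_transpose_mult_self power2_norm_eq_inner scaleR_matrix_vector_assoc[symmetric])
  have "A *v v0 = 0"
  proof (rule psd_form_zero_imp_kernel)
    show "transpose A = A"
      by (simp add: A_def vec_eq_iff transpose_def matrix_matrix_mult_def mat_def mult.commute)
  qed (use bound v0 in \<open>simp_all add: form m_def right_diff_distrib\<close>)
  then have "(transpose B ** B) *v v0 = m *\<^sub>R v0" and "v0 \<noteq> 0"
    using v0 \<open>s \<noteq> 0\<close>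
    by (auto simp: A_def matrix_vector_mult_diff_rdistrib mat_mult_vector scaleR_matrix_vector_assoc[symmetric])
  then show "m \<in> eigvals (transpose B ** B)"
    unfolding eigvals_def by blast
qed

lemma continuous_on_norm_mult_sq: "continuous_on S (\<lambda>v. (norm (B *v v))\<^sup>2)"
  for B :: "real^'a^'b"
  by (intro continuous_intros linear_continuous_on matrix_vector_mul_bounded_linear)

lemma eigval_rayleigh_lower:
  fixes B :: "real^'a^'b"
  obtains m where "m \<in> eigvals (transpose B ** B)" and "\<And>v. m * (norm v)\<^sup>2 \<le> (norm (B *v v))\<^sup>2"
proof -
  have "\<exists>v0 \<in> sphere 0 1. \<forall>u \<in> sphere 0 1. (norm (B *v v0))\<^sup>2 \<le> (norm (B *v u))\<^sup>2"
    by (rule continuous_attains_inf[OF compact_sphere _ continuous_on_norm_mult_sq]) simp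
  then obtain v0 where "v0 \<in> sphere 0 1" "\<forall>u \<in> sphere 0 1. (norm (B *v v0))\<^sup>2 \<le> (norm (B *v u))\<^sup>2"
    by blast
  then show thesis
    using that eigval_of_rayleigh_extremum[of 1 v0 B] by simp
qed

lemma eigval_rayleigh_upper:
  fixes B :: "real^'a^'b"
  obtains m where "m \<in> eigvals (transpose B ** B)" and "\<And>v. (norm (B *v v))\<^sup>2 \<le> m * (norm v)\<^sup>2"
proof -
  have "\<exists>v0 \<in> sphere 0 1. \<forall>u \<in> sphere 0 1. (norm (B *v u))\<^sup>2 \<le> (norm (B *v v0))\<^sup>2"
    by (rule continuous_attains_sup[OF compact_sphere _ continuous_on_norm_mult_sq]) simp
  then obtain v0 where "v0 \<in> sphere 0 1" "\<forall>u \<in> sphere 0 1. (norm (B *v u))\<^sup>2 \<le> (norm (B *v v0))\<^sup>2"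
    by blast
  then show thesis
    using that eigval_of_rayleigh_extremum[of "-1" v0 B] by simp
qed

lemma finite_eigvals_symmetric:
  fixes A :: "real^'m^'m"
  assumes sym: "transpose A = A"
  shows "finite (eigvals A)"
proof -
  define ev where "ev c = (SOME v. v \<noteq> 0 \<and> A *v v = c *\<^sub>R v)" for c
  have ev: "ev c \<noteq> 0 \<and> A *v ev c = c *\<^sub>R ev c" if "c \<in> eigvals A" for c
  proof -
    have "\<exists>v. v \<noteq> 0 \<and> A *v v = c *\<^sub>R v"
      using that by (simp add: eigvals_def)
    then show ?thesis
      unfolding ev_def by (rule someI_ex)
  qed
  have inj: "inj_on ev (eigvals A)"
  proof (rule inj_onI)
    fix c d assume "c \<in> eigvals A" "d \<in> eigvals A" "ev c = ev d"
    then have "(c - d) *\<^sub>R ev c = 0"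
      using ev by (metis scaleR_left_diff_distrib diff_self)
    then show "c = d"
      using ev \<open>c \<in> eigvals A\<close> by simp
  qed
  have "pairwise orthogonal (ev ` eigvals A)"
  proof (clarsimp simp: pairwise_def)
    fix c d assume c: "c \<in> eigvals A" and d: "d \<in> eigvals A" and "ev c \<noteq> ev d"
    then have "c \<noteq> d"
      by auto
    have "c * (ev c \<bullet> ev d) = (transpose A *v ev c) \<bullet> ev d"
      using ev[OF c] sym by simp
    also have "\<dots> = ev c \<bullet> (A *v ev d)"
      by (rule inner_transpose_mult)
    also have "\<dots> = d * (ev c \<bullet> ev d)"
      using ev[OF d] by simp
    finally show "orthogonal (ev c) (ev d)"
      using \<open>c \<noteq> d\<close> by (simp add: orthogonal_def)
  qed
  moreover have "0 \<notin> ev ` eigvals A"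
    using ev by force
  ultimately have "finite (ev ` eigvals A)"
    using pairwise_orthogonal_independent independent_imp_finite by blast
  then show ?thesis
    using inj finite_image_iff by blast
qed

lemma symmetric_transpose_mult_self: "transpose (transpose B ** B) = transpose B ** B"
  for B :: "real^'a^'b"
  by (simp add: matrix_transpose_mul)

lemma lambda_min_rayleigh:
  fixes B :: "real^'a^'b"
  shows "lambda_min (transpose B ** B) * (norm v)\<^sup>2 \<le> (norm (B *v v))\<^sup>2"
proof -
  obtain m where m: "m \<in> eigvals (transpose B ** B)" and bound: "\<And>v. m * (norm v)\<^sup>2 \<le> (norm (B *v v))\<^sup>2"
    using eigval_rayleigh_lower[of B] by blast
  have "lambda_min (transpose B ** B) \<le> m"
    unfolding lambda_min_def
    using m finite_eigvals_symmetric[OF symmetric_transpose_mult_self[of B]] by simp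
  then have "lambda_min (transpose B ** B) * (norm v)\<^sup>2 \<le> m * (norm v)\<^sup>2"
    by (rule mult_right_mono) simp
  then show ?thesis
    using bound[of v] by (rule order_trans)
qed

lemma lambda_max_rayleigh:
  fixes B :: "real^'a^'b"
  shows "0 \<le> lambda_max (transpose B ** B)"
    and "(norm (B *v v))\<^sup>2 \<le> lambda_max (transpose B ** B) * (norm v)\<^sup>2"
proof -
  obtain m where m: "m \<in> eigvals (transpose B ** B)" and bound: "\<And>v. (norm (B *v v))\<^sup>2 \<le> m * (norm v)\<^sup>2"
    using eigval_rayleigh_upper[of B] by blast
  have le: "m \<le> lambda_max (transpose B ** B)"
    unfolding lambda_max_def
    using m finite_eigvals_symmetric[OF symmetric_transpose_mult_self[of B]] by simp
  obtain i :: 'a where True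
    by simp
  have "0 \<le> m"
    using order_trans[OF zero_le_power2 bound[of "axis i 1"]] by (simp add: norm_axis_1)
  then show "0 \<le> lambda_max (transpose B ** B)"
    using le by simp
  have "m * (norm v)\<^sup>2 \<le> lambda_max (transpose B ** B) * (norm v)\<^sup>2"
    using le by (rule mult_right_mono) simp
  then show "(norm (B *v v))\<^sup>2 \<le> lambda_max (transpose B ** B) * (norm v)\<^sup>2"
    using bound[of v] by simp
qed

lemma sigma_max_nonneg: "0 \<le> sigma_max G"
  by (simp add: sigma_max_def lambda_max_rayleigh(1))

lemma norm_mult_le_sigma_max: "norm (G *v x) \<le> sigma_max G * norm x"
proof -
  have "(norm (G *v x))\<^sup>2 \<le> (sigma_max G * norm x)\<^sup>2"
    using lambda_max_rayleigh[of G] by (simp add: sigma_max_def power_mult_distrib)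
  then show ?thesis
    by (rule power2_le_imp_le) (simp add: sigma_max_nonneg)
qed

lemma norm_transpose_mult_le_sigma_max: "norm (transpose G *v v) \<le> sigma_max G * norm v"
proof -
  let ?u = "transpose G *v v"
  have "norm ?u * norm ?u = v \<bullet> (G *v ?u)"
    by (simp only: power2_eq_square[symmetric] power2_norm_eq_inner inner_transpose_mult)
  also have "\<dots> \<le> norm v * norm (G *v ?u)"
    by (rule order_trans[OF abs_ge_self Cauchy_Schwarz_ineq2])
  also have "\<dots> \<le> norm v * (sigma_max G * norm ?u)"
    by (simp add: mult_left_mono norm_mult_le_sigma_max)
  finally have "norm ?u * norm ?u \<le> norm ?u * (sigma_max G * norm v)"
    by (simp only: ac_simps)
  then show ?thesis
    using sigma_max_nonneg[of G] by (cases "norm ?u = 0") simp_all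
qed

lemma lambda_min_le_sigma_max_sq:
  fixes G :: "real^'n^'w"
  shows "lambda_min (G ** transpose G) \<le> (sigma_max G)\<^sup>2"
proof -
  obtain j :: 'w where True
    by simp
  have "lambda_min (G ** transpose G) = lambda_min (G ** transpose G) * (norm (axis j (1::real)))\<^sup>2"
    by (simp add: norm_axis_1)
  also have "\<dots> \<le> (norm (transpose G *v axis j 1))\<^sup>2"
    using lambda_min_rayleigh[of "transpose G" "axis j 1"] by (simp only: transpose_transpose)
  also have "\<dots> \<le> (sigma_max G)\<^sup>2"
    using power_mono[OF norm_transpose_mult_le_sigma_max[of G "axis j 1"] norm_ge_zero, of 2]
    by (simp add: norm_axis_1)
  finally show ?thesis .
qed

section \<open>Two-sided quadratic bounds and tilted minimizers\<close>

definition quadratic_sandwich :: "real \<Rightarrow> real \<Rightarrow> ('a::real_inner \<Rightarrow> real) \<Rightarrow> bool" where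
  "quadratic_sandwich \<gamma> \<beta> F \<longleftrightarrow> (\<forall>x. \<exists>p. \<forall>h.
     F x + p \<bullet> h + \<gamma> / 2 * (norm h)\<^sup>2 \<le> F (x + h) \<and> F (x + h) \<le> F x + p \<bullet> h + \<beta> / 2 * (norm h)\<^sup>2)"

definition tilted_minimizer :: "('a::real_inner \<Rightarrow> real) \<Rightarrow> 'a \<Rightarrow> 'a \<Rightarrow> bool" where
  "tilted_minimizer F b y \<longleftrightarrow> (\<forall>u. F y + b \<bullet> y \<le> F u + b \<bullet> u)"

lemma quadratic_sandwichE:
  assumes "quadratic_sandwich \<gamma> \<beta> F"
  obtains p where "\<And>h. F x + p \<bullet> h + \<gamma> / 2 * (norm h)\<^sup>2 \<le> F (x + h)"
    and "\<And>h. F (x + h) \<le> F x + p \<bullet> h + \<beta> / 2 * (norm h)\<^sup>2"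
  using assms unfolding quadratic_sandwich_def by blast

lemma quadratic_sandwich_add_linear:
  assumes "quadratic_sandwich \<gamma> \<beta> F"
  shows "quadratic_sandwich \<gamma> \<beta> (\<lambda>x. F x + b \<bullet> x)"
  unfolding quadratic_sandwich_def
proof
  fix x
  obtain p where lower: "\<And>h. F x + p \<bullet> h + \<gamma> / 2 * (norm h)\<^sup>2 \<le> F (x + h)"
    and upper: "\<And>h. F (x + h) \<le> F x + p \<bullet> h + \<beta> / 2 * (norm h)\<^sup>2"
    by (fact quadratic_sandwichE[OF assms, where x = x])
  show "\<exists>q. \<forall>h. F x + b \<bullet> x + q \<bullet> h + \<gamma> / 2 * (norm h)\<^sup>2 \<le> F (x + h) + b \<bullet> (x + h) \<and>
      F (x + h) + b \<bullet> (x + h) \<le> F x + b \<bullet> x + q \<bullet> h + \<beta> / 2 * (norm h)\<^sup>2"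
  proof (intro exI[of _ "p + b"] allI conjI)
    fix h
    show "F x + b \<bullet> x + (p + b) \<bullet> h + \<gamma> / 2 * (norm h)\<^sup>2 \<le> F (x + h) + b \<bullet> (x + h)"
      using lower[of h] by (simp add: inner_add_left inner_add_right)
    show "F (x + h) + b \<bullet> (x + h) \<le> F x + b \<bullet> x + (p + b) \<bullet> h + \<beta> / 2 * (norm h)\<^sup>2"
      using upper[of h] by (simp add: inner_add_left inner_add_right)
  qed
qed

lemma quadratic_sandwich_lower_le_upper:
  fixes F :: "'a::euclidean_space \<Rightarrow> real"
  assumes "quadratic_sandwich \<gamma> \<beta> F"
  shows "\<gamma> \<le> \<beta>"
proof -
  obtain e :: 'a where e: "e \<in> Basis"
    using nonempty_Basis by blast
  obtain p where lower: "\<And>h. F 0 + p \<bullet> h + \<gamma> / 2 * (norm h)\<^sup>2 \<le> F (0 + h)"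
    and upper: "\<And>h. F (0 + h) \<le> F 0 + p \<bullet> h + \<beta> / 2 * (norm h)\<^sup>2"
    by (fact quadratic_sandwichE[OF assms, where x = 0])
  show ?thesis
    using lower[of e] upper[of e] e by simp
qed

lemma quadratic_sandwich_at_minimizer:
  assumes "quadratic_sandwich \<gamma> \<beta> F" and min: "\<And>x. F y \<le> F x"
  shows "F y + \<gamma> / 2 * (norm h)\<^sup>2 \<le> F (y + h)" and "F (y + h) \<le> F y + \<beta> / 2 * (norm h)\<^sup>2"
proof -
  obtain p where lower: "\<And>h. F y + p \<bullet> h + \<gamma> / 2 * (norm h)\<^sup>2 \<le> F (y + h)"
    and upper: "\<And>h. F (y + h) \<le> F y + p \<bullet> h + \<beta> / 2 * (norm h)\<^sup>2"
    by (fact quadratic_sandwichE[OF assms(1), where x = y])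
  have "- (p \<bullet> p) / 2 = 0"
  proof (rule quadratic_nonneg_imp_linear_coeff_zero)
    fix t :: real
    have "F y \<le> F y + p \<bullet> (- t *\<^sub>R p) + \<beta> / 2 * (norm (- t *\<^sub>R p))\<^sup>2"
      using min[of "y + - t *\<^sub>R p"] upper[of "- t *\<^sub>R p"] by linarith
    moreover have "p \<bullet> (- t *\<^sub>R p) + \<beta> / 2 * (norm (- t *\<^sub>R p))\<^sup>2
        = 2 * t * (- (p \<bullet> p) / 2) + t\<^sup>2 * (\<beta> / 2 * (p \<bullet> p))"
      by (simp only: power2_norm_eq_inner) (simp add: power2_eq_square)
    ultimately show "0 \<le> 2 * t * (- (p \<bullet> p) / 2) + t\<^sup>2 * (\<beta> / 2 * (p \<bullet> p))"
      by linarith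
  qed
  then have "p = 0"
    by simp
  then show "F y + \<gamma> / 2 * (norm h)\<^sup>2 \<le> F (y + h)" and "F (y + h) \<le> F y + \<beta> / 2 * (norm h)\<^sup>2"
    using lower[of h] upper[of h] by simp_all
qed

lemma quadratic_sandwich_continuous:
  assumes "quadratic_sandwich \<gamma> \<beta> F"
  shows "continuous_on UNIV F"
proof (rule continuous_at_imp_continuous_on, intro ballI)
  fix x
  obtain p where lower: "\<And>h. F x + p \<bullet> h + \<gamma> / 2 * (norm h)\<^sup>2 \<le> F (x + h)"
    and upper: "\<And>h. F (x + h) \<le> F x + p \<bullet> h + \<beta> / 2 * (norm h)\<^sup>2"
    by (fact quadratic_sandwichE[OF assms, where x = x])
  have bound: "((\<lambda>u. F x + p \<bullet> (u - x) + c / 2 * (norm (u - x))\<^sup>2) \<longlongrightarrow> F x) (at x)" for c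
  proof -
    have "((\<lambda>u. F x + p \<bullet> (u - x) + c / 2 * (norm (u - x))\<^sup>2)
        \<longlongrightarrow> F x + p \<bullet> (x - x) + c / 2 * (norm (x - x))\<^sup>2) (at x)"
      by (intro tendsto_intros)
    then show ?thesis
      by simp
  qed
  have "F x + p \<bullet> (u - x) + \<gamma> / 2 * (norm (u - x))\<^sup>2 \<le> F u"
    and "F u \<le> F x + p \<bullet> (u - x) + \<beta> / 2 * (norm (u - x))\<^sup>2" for u
    using lower[of "u - x"] upper[of "u - x"] by simp_all
  then have "(F \<longlongrightarrow> F x) (at x)"
    by (intro tendsto_sandwich[OF _ _ bound[of \<gamma>] bound[of \<beta>]] always_eventually allI)
  then show "isCont F x"
    by (simp add: isCont_def)
qed

lemma quadratic_sandwich_has_minimizer: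
  fixes F :: "'a::euclidean_space \<Rightarrow> real"
  assumes sandwich: "quadratic_sandwich \<gamma> \<beta> F" and "0 < \<gamma>"
  obtains y where "\<And>x. F y \<le> F x"
proof -
  obtain q where q: "\<And>h. F 0 + q \<bullet> h + \<gamma> / 2 * (norm h)\<^sup>2 \<le> F (0 + h)"
    and "\<And>h. F (0 + h) \<le> F 0 + q \<bullet> h + \<beta> / 2 * (norm h)\<^sup>2"
    by (fact quadratic_sandwichE[OF sandwich, where x = 0])
  define R where "R = 2 * norm q / \<gamma>"
  have "0 \<le> R"
    using \<open>0 < \<gamma>\<close> by (simp add: R_def)
  have "\<exists>y \<in> cball 0 R. \<forall>x \<in> cball 0 R. F y \<le> F x"
    using \<open>0 \<le> R\<close> quadratic_sandwich_continuous[OF sandwich]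
    by (intro continuous_attains_inf) (auto intro: continuous_on_subset)
  then obtain y where y_min: "\<forall>x \<in> cball 0 R. F y \<le> F x"
    by blast
  have "F y \<le> F x" for x
  proof (cases "x \<in> cball 0 R")
    case False
    then have "norm q \<le> \<gamma> / 2 * norm x"
      using \<open>0 < \<gamma>\<close> by (simp add: R_def field_simps)
    then have "norm q * norm x \<le> \<gamma> / 2 * norm x * norm x"
      by (rule mult_right_mono) simp
    then have "norm q * norm x \<le> \<gamma> / 2 * (norm x)\<^sup>2"
      by (simp add: power2_eq_square mult.assoc)
    then have "F 0 \<le> F x"
      using q[of x] Cauchy_Schwarz_ineq2[of q x] by simp
    moreover have "F y \<le> F 0"
      using y_min \<open>0 \<le> R\<close> by simp
    ultimately show ?thesis
      by linarith
  qed (use y_min in blast)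
  then show thesis
    by (rule that)
qed

lemma tilted_minimizer_exists:
  fixes F :: "'a::euclidean_space \<Rightarrow> real"
  assumes "quadratic_sandwich \<gamma> \<beta> F" and "0 < \<gamma>"
  obtains y where "tilted_minimizer F b y"
  using quadratic_sandwich_has_minimizer[OF quadratic_sandwich_add_linear[OF assms(1)] assms(2)]
  unfolding tilted_minimizer_def by blast

lemma tilted_minimizer_growth:
  assumes "quadratic_sandwich \<gamma> \<beta> F" and "tilted_minimizer F b y"
  shows "F y + b \<bullet> y + \<gamma> / 2 * (norm (u - y))\<^sup>2 \<le> F u + b \<bullet> u"
  using quadratic_sandwich_at_minimizer(1)[OF quadratic_sandwich_add_linear[OF assms(1), where b = b],
      where y = y and h = "u - y"] assms(2)
  unfolding tilted_minimizer_def by simp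

lemma tilted_minimizer_unique:
  assumes "quadratic_sandwich \<gamma> \<beta> F" and "0 < \<gamma>"
    and "tilted_minimizer F b y1" and "tilted_minimizer F b y2"
  shows "y1 = y2"
proof -
  have "\<gamma> / 2 * (norm (y2 - y1))\<^sup>2 \<le> 0"
    using tilted_minimizer_growth[OF assms(1,3), of y2] assms(4)[unfolded tilted_minimizer_def, rule_format, of y1]
    by linarith
  then show ?thesis
    using \<open>0 < \<gamma>\<close> by (simp add: mult_le_0_iff)
qed

text \<open>Test the new objective at \<open>y1 + (b1 - b2) /\<^sub>R \<beta>\<close>.\<close>

lemma tilted_minimizer_value_gap:
  assumes sandwich: "quadratic_sandwich \<gamma> \<beta> F" and "0 < \<beta>"
    and min1: "tilted_minimizer F b1 y1" and min2: "tilted_minimizer F b2 y2"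
  shows "F y2 + b2 \<bullet> y2 \<le> F y1 + b2 \<bullet> y1 - (norm (b1 - b2))\<^sup>2 / (2 * \<beta>)"
proof -
  define \<delta> where "\<delta> = b1 - b2"
  define h where "h = \<delta> /\<^sub>R \<beta>"
  have "F (y1 + h) + b1 \<bullet> (y1 + h) \<le> F y1 + b1 \<bullet> y1 + \<beta> / 2 * (norm h)\<^sup>2"
    using quadratic_sandwich_at_minimizer(2)[OF quadratic_sandwich_add_linear[OF sandwich, where b = b1],
        where y = y1 and h = h] min1
    unfolding tilted_minimizer_def by blast
  moreover have "\<beta> / 2 * (norm h)\<^sup>2 - \<delta> \<bullet> h = - (norm \<delta>)\<^sup>2 / (2 * \<beta>)"
  proof -
    have "(norm h)\<^sup>2 = (norm \<delta>)\<^sup>2 / \<beta>\<^sup>2"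
      by (simp add: h_def power_mult_distrib power_inverse divide_inverse_commute)
    moreover have "\<delta> \<bullet> h = (norm \<delta>)\<^sup>2 / \<beta>"
      by (simp add: h_def power2_norm_eq_inner divide_inverse_commute)
    ultimately show ?thesis
      using \<open>0 < \<beta>\<close> by (simp add: power2_eq_square field_simps)
  qed
  moreover have "F y2 + b2 \<bullet> y2 \<le> F (y1 + h) + b2 \<bullet> (y1 + h)"
    using min2 unfolding tilted_minimizer_def by blast
  ultimately show ?thesis
    by (simp add: \<delta>_def inner_diff_left inner_add_right algebra_simps)
qed

lemma tilted_minimizer_cocoercive:
  assumes "quadratic_sandwich \<gamma> \<beta> F" and "0 < \<beta>"
    and "tilted_minimizer F b1 y1" and "tilted_minimizer F b2 y2"
  shows "(b1 - b2) \<bullet> (y1 - y2) \<le> - (norm (b1 - b2))\<^sup>2 / \<beta>"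
  using tilted_minimizer_value_gap[OF assms] tilted_minimizer_value_gap[OF assms(1,2,4,3)]
  by (simp add: norm_minus_commute inner_diff_left inner_diff_right field_simps)

lemma tilted_minimizer_strongly_monotone:
  assumes "quadratic_sandwich \<gamma> \<beta> F"
    and "tilted_minimizer F b1 y1" and "tilted_minimizer F b2 y2"
  shows "\<gamma> * (norm (y1 - y2))\<^sup>2 \<le> - ((b1 - b2) \<bullet> (y1 - y2))"
  using tilted_minimizer_growth[OF assms(1,2), of y2] tilted_minimizer_growth[OF assms(1,3), of y1]
  by (simp add: norm_minus_commute inner_diff_left inner_diff_right algebra_simps)

lemma tilted_minimizer_lipschitz:
  assumes "quadratic_sandwich \<gamma> \<beta> F" and "0 < \<gamma>"
    and "tilted_minimizer F b1 y1" and "tilted_minimizer F b2 y2"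
  shows "\<gamma> * norm (y1 - y2) \<le> norm (b1 - b2)"
proof -
  have "(\<gamma> * norm (y1 - y2)) * norm (y1 - y2) \<le> norm (b1 - b2) * norm (y1 - y2)"
    using tilted_minimizer_strongly_monotone[OF assms(1,3,4)] Cauchy_Schwarz_ineq2[of "b1 - b2" "y1 - y2"]
    by (simp add: power2_eq_square mult.assoc)
  then show ?thesis
    using \<open>0 < \<gamma>\<close> by (cases "y1 = y2") simp_all
qed

section \<open>Expected strongly convex losses\<close>

lemma gderiv_along_line:
  fixes \<phi> :: "'a::real_inner \<Rightarrow> real"
  assumes "GDERIV \<phi> (x + s *\<^sub>R h) :> D"
  shows "((\<lambda>s. \<phi> (x + s *\<^sub>R h)) has_real_derivative D \<bullet> h) (at s)"
proof -
  have "((\<lambda>s. x + s *\<^sub>R h) has_derivative (\<lambda>t. t *\<^sub>R h)) (at s)"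
    by (auto intro!: derivative_eq_intros)
  moreover have "(\<phi> has_derivative (\<lambda>k. k \<bullet> D)) (at (x + s *\<^sub>R h))"
    using assms by (simp add: gderiv_def)
  ultimately have "((\<lambda>s. \<phi> (x + s *\<^sub>R h)) has_derivative (\<lambda>t. (t *\<^sub>R h) \<bullet> D)) (at s)"
    by (rule has_derivative_compose)
  moreover have "(\<lambda>t. (t *\<^sub>R h) \<bullet> D) = (*) (D \<bullet> h)"
    by (auto simp: inner_commute)
  ultimately show ?thesis
    by (simp add: has_field_derivative_def)
qed

lemma strongly_convex_gderiv_lower:
  fixes \<phi> :: "'a::real_inner \<Rightarrow> real"
  assumes sc: "strongly_convex \<gamma> \<phi>" and deriv: "\<And>x. GDERIV \<phi> x :> \<phi>' x"
  shows "\<phi> x + \<phi>' x \<bullet> h + \<gamma> / 2 * (norm h)\<^sup>2 \<le> \<phi> (x + h)"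
proof -
  let ?\<psi> = "\<lambda>s. \<phi> (x + s *\<^sub>R h)"
  let ?bound = "\<lambda>t. \<phi> (x + h) - \<phi> x - \<gamma> / 2 * (1 - t) * (norm h)\<^sup>2"
  have "(?\<psi> has_real_derivative \<phi>' x \<bullet> h) (at 0)"
    using gderiv_along_line[of \<phi> x 0 h] deriv by simp
  then have quotient: "((\<lambda>t. (?\<psi> t - ?\<psi> 0) / (t - 0)) \<longlongrightarrow> \<phi>' x \<bullet> h) (at_right 0)"
    unfolding has_field_derivative_iff by (rule tendsto_mono[OF at_le, rotated]) simp
  have "(?bound \<longlongrightarrow> ?bound 0) (at_right 0)"
    by (intro tendsto_intros)
  moreover have "\<forall>\<^sub>F t in at_right 0. (?\<psi> t - ?\<psi> 0) / (t - 0) \<le> ?bound t"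
    using eventually_at_right_real[of 0 1]
  proof (rule eventually_mono)
    fix t :: real assume t: "t \<in> {0<..<1}"
    have "t *\<^sub>R (x + h) + (1 - t) *\<^sub>R x = x + t *\<^sub>R h"
      by (simp add: algebra_simps)
    then have "?\<psi> t \<le> t * \<phi> (x + h) + (1 - t) * \<phi> x - \<gamma> / 2 * t * (1 - t) * (norm h)\<^sup>2"
      using sc t unfolding strongly_convex_def
      by (metis add_diff_cancel_left' greaterThanLessThan_iff less_eq_real_def)
    then show "(?\<psi> t - ?\<psi> 0) / (t - 0) \<le> ?bound t"
      using t by (simp add: divide_simps algebra_simps)
  qed simp
  ultimately have "\<phi>' x \<bullet> h \<le> ?bound 0"
    by (intro tendsto_le[OF _ _ quotient]) simp_all
  then show ?thesis
    by simp
qed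

lemma lipschitz_gderiv_upper:
  fixes \<phi> :: "'a::real_inner \<Rightarrow> real"
  assumes deriv: "\<And>x. GDERIV \<phi> x :> \<phi>' x"
    and lip: "\<And>x y. norm (\<phi>' x - \<phi>' y) \<le> \<beta> * norm (x - y)"
  shows "\<phi> (x + h) \<le> \<phi> x + \<phi>' x \<bullet> h + \<beta> / 2 * (norm h)\<^sup>2"
proof -
  define \<psi> where "\<psi> s = \<phi> (x + s *\<^sub>R h) - s * (\<phi>' x \<bullet> h) - \<beta> / 2 * s\<^sup>2 * (norm h)\<^sup>2" for s
  have "\<psi> 1 \<le> \<psi> 0"
  proof (rule DERIV_nonpos_imp_nonincreasing[of 0 1])
    fix s :: real assume s: "0 \<le> s" "s \<le> 1"
    have "(\<psi> has_real_derivative (\<phi>' (x + s *\<^sub>R h) - \<phi>' x) \<bullet> h - \<beta> * s * (norm h)\<^sup>2) (at s)"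
      unfolding \<psi>_def using gderiv_along_line[OF deriv]
      by (auto intro!: derivative_eq_intros simp: inner_diff_left)
    moreover have "(\<phi>' (x + s *\<^sub>R h) - \<phi>' x) \<bullet> h \<le> \<beta> * s * (norm h)\<^sup>2"
    proof -
      have "(\<phi>' (x + s *\<^sub>R h) - \<phi>' x) \<bullet> h \<le> norm (\<phi>' (x + s *\<^sub>R h) - \<phi>' x) * norm h"
        by (rule order_trans[OF abs_ge_self Cauchy_Schwarz_ineq2])
      also have "\<dots> \<le> \<beta> * norm (s *\<^sub>R h) * norm h"
        using lip[of "x + s *\<^sub>R h" x] by (simp add: mult_right_mono)
      finally show ?thesis
        using s by (simp add: power2_eq_square mult.assoc)
    qed
    ultimately show "\<exists>y. (\<psi> has_real_derivative y) (at s) \<and> y \<le> 0"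
      by auto
  qed simp
  then show ?thesis
    by (simp add: \<psi>_def)
qed

lemma difference_quotient_tendsto_gderiv:
  fixes \<phi> :: "'a::real_inner \<Rightarrow> real"
  assumes "GDERIV \<phi> x :> D"
  shows "(\<lambda>n. (\<phi> (x + inverse (real (Suc n)) *\<^sub>R e) - \<phi> x) / inverse (real (Suc n))) \<longlonglongrightarrow> D \<bullet> e"
proof -
  have "((\<lambda>s. \<phi> (x + s *\<^sub>R e)) has_real_derivative D \<bullet> e) (at 0)"
    using gderiv_along_line[of \<phi> x 0 e] assms by simp
  then have "((\<lambda>t. (\<phi> (x + t *\<^sub>R e) - \<phi> x) / t) \<longlongrightarrow> D \<bullet> e) (at 0)"
    by (simp add: has_field_derivative_iff)
  moreover have "filterlim (\<lambda>n. inverse (real (Suc n))) (at 0) sequentially"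
    unfolding filterlim_at using LIMSEQ_inverse_real_of_nat by auto
  ultimately show ?thesis
    by (rule filterlim_compose)
qed

lemma integrable_gderiv_component:
  fixes l :: "real^'n \<Rightarrow> 'z \<Rightarrow> real" and gradl :: "real^'n \<Rightarrow> 'z \<Rightarrow> real^'n"
  assumes AE: "AE z in M. z \<in> Z" and l_int: "\<And>x. integrable M (l x)"
    and grad: "\<And>x z. GDERIV (\<lambda>u. l u z) x :> gradl x z"
    and convex: "\<And>z. z \<in> Z \<Longrightarrow> strongly_convex \<gamma> (\<lambda>x. l x z)" and "0 \<le> \<gamma>"
  shows "integrable M (\<lambda>z. gradl x z $ i)"
proof (rule Bochner_Integration.integrable_bound)
  show "integrable M (\<lambda>z. \<bar>l (x + axis i 1) z - l x z\<bar> + \<bar>l (x + - axis i 1) z - l x z\<bar>)"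
    by (intro Bochner_Integration.integrable_add integrable_abs Bochner_Integration.integrable_diff l_int)
  show "(\<lambda>z. gradl x z $ i) \<in> borel_measurable M"
  proof (rule borel_measurable_LIMSEQ_real)
    fix z
    show "(\<lambda>n. (l (x + inverse (real (Suc n)) *\<^sub>R axis i 1) z - l x z) / inverse (real (Suc n)))
        \<longlonglongrightarrow> gradl x z $ i"
      using difference_quotient_tendsto_gderiv[OF grad, where e = "axis i 1"]
      by (simp add: inner_axis)
  qed (use l_int in \<open>auto intro!: borel_measurable_divide borel_measurable_diff\<close>)
  show "AE z in M. norm (gradl x z $ i)
      \<le> norm (\<bar>l (x + axis i 1) z - l x z\<bar> + \<bar>l (x + - axis i 1) z - l x z\<bar>)"
    using AE
  proof (rule AE_mp, intro AE_I2 impI)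
    fix z assume "z \<in> Z"
    note lower = strongly_convex_gderiv_lower[OF convex[OF \<open>z \<in> Z\<close>] grad]
    show "norm (gradl x z $ i) \<le> norm (\<bar>l (x + axis i 1) z - l x z\<bar> + \<bar>l (x + - axis i 1) z - l x z\<bar>)"
      using lower[of x "axis i 1"] lower[of x "- axis i 1"] \<open>0 \<le> \<gamma>\<close>
      by (simp add: inner_axis norm_axis_1)
  qed
qed

lemma quadratic_sandwich_expectation:
  fixes l :: "real^'n \<Rightarrow> 'z \<Rightarrow> real" and gradl :: "real^'n \<Rightarrow> 'z \<Rightarrow> real^'n"
  assumes "prob_space M" and AE: "AE z in M. z \<in> Z" and l_int: "\<And>x. integrable M (l x)"
    and grad: "\<And>x z. GDERIV (\<lambda>u. l u z) x :> gradl x z"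
    and convex: "\<And>z. z \<in> Z \<Longrightarrow> strongly_convex \<gamma> (\<lambda>x. l x z)"
    and lip: "\<And>x y z. z \<in> Z \<Longrightarrow> norm (gradl x z - gradl y z) \<le> \<beta> * norm (x - y)"
    and "0 \<le> \<gamma>"
  shows "quadratic_sandwich \<gamma> \<beta> (\<lambda>x. \<integral>z. l x z \<partial>M)"
  unfolding quadratic_sandwich_def
proof
  fix x
  interpret prob_space M
    by fact
  define p where "p = (\<chi> i. \<integral>z. gradl x z $ i \<partial>M)"
  have grad_int: "integrable M (\<lambda>z. gradl x z $ i * h $ i)" for i h
    using integrable_gderiv_component[OF AE l_int grad convex \<open>0 \<le> \<gamma>\<close>] by simp
  have inner_int: "integrable M (\<lambda>z. gradl x z \<bullet> h)" for h
    unfolding inner_vec_def inner_real_def using grad_int by simp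
  have mean_grad: "(\<integral>z. gradl x z \<bullet> h \<partial>M) = p \<bullet> h" for h
    unfolding inner_vec_def inner_real_def p_def
    using grad_int by (simp add: Bochner_Integration.integral_sum)
  have integral_bound: "(\<integral>z. l x z + gradl x z \<bullet> h + c \<partial>M) = (\<integral>z. l x z \<partial>M) + p \<bullet> h + c"
    and integrable_bound: "integrable M (\<lambda>z. l x z + gradl x z \<bullet> h + c)" for h c
    using l_int inner_int by (simp_all add: mean_grad[symmetric] prob_space)
  show "\<exists>p. \<forall>h. (\<integral>z. l x z \<partial>M) + p \<bullet> h + \<gamma> / 2 * (norm h)\<^sup>2 \<le> (\<integral>z. l (x + h) z \<partial>M) \<and>
      (\<integral>z. l (x + h) z \<partial>M) \<le> (\<integral>z. l x z \<partial>M) + p \<bullet> h + \<beta> / 2 * (norm h)\<^sup>2"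
  proof (intro exI[of _ p] allI conjI)
    fix h
    show "(\<integral>z. l x z \<partial>M) + p \<bullet> h + \<gamma> / 2 * (norm h)\<^sup>2 \<le> (\<integral>z. l (x + h) z \<partial>M)"
      unfolding integral_bound[symmetric]
      using AE strongly_convex_gderiv_lower[OF convex grad]
      by (intro integral_mono_AE integrable_bound l_int) (auto elim: AE_mp)
    show "(\<integral>z. l (x + h) z \<partial>M) \<le> (\<integral>z. l x z \<partial>M) + p \<bullet> h + \<beta> / 2 * (norm h)\<^sup>2"
      unfolding integral_bound[symmetric]
      using AE lipschitz_gderiv_upper[OF grad lip]
      by (intro integral_mono_AE integrable_bound l_int) (auto elim: AE_mp)
  qed
qed

section \<open>The 1-Wasserstein distance\<close>

lemma abs_integral_diff_le_W1:
  assumes "1-lipschitz_on UNIV g" and "integrable \<mu> g" and "integrable \<nu> g"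
  shows "ereal \<bar>(\<integral>z. g z \<partial>\<mu>) - (\<integral>z. g z \<partial>\<nu>)\<bar> \<le> W1 \<mu> \<nu>"
  unfolding W1_def by (rule SUP_upper) (use assms in auto)

lemma W1_nonneg: "0 \<le> W1 \<mu> \<nu>"
proof -
  have "1-lipschitz_on UNIV (\<lambda>_. 0 :: real)"
    by (simp add: lipschitz_on_def)
  then show ?thesis
    using abs_integral_diff_le_W1[of "\<lambda>_. 0" \<mu> \<nu>] by (simp add: zero_ereal_def)
qed

lemma norm_mean_diff_le_W1:
  fixes \<mu> \<nu> :: "'w::euclidean_space measure"
  assumes "integrable \<mu> (\<lambda>w. w)" and "integrable \<nu> (\<lambda>w. w)" and W1_le: "W1 \<mu> \<nu> \<le> ereal c"
  shows "norm ((\<integral>w. w \<partial>\<mu>) - (\<integral>w. w \<partial>\<nu>)) \<le> c"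
proof -
  define d where "d = (\<integral>w. w \<partial>\<mu>) - (\<integral>w. w \<partial>\<nu>)"
  define u where "u = d /\<^sub>R norm d"
  have "norm u \<le> 1"
    by (cases "d = 0") (simp_all add: u_def)
  have "1-lipschitz_on UNIV (\<lambda>w. u \<bullet> w)"
  proof (rule lipschitz_onI)
    fix x y :: 'w
    have "dist (u \<bullet> x) (u \<bullet> y) \<le> norm u * norm (x - y)"
      unfolding dist_real_def inner_diff_right[symmetric] by (rule Cauchy_Schwarz_ineq2)
    also have "\<dots> \<le> 1 * dist x y"
      unfolding dist_norm using \<open>norm u \<le> 1\<close> by (rule mult_right_mono) simp
    finally show "dist (u \<bullet> x) (u \<bullet> y) \<le> 1 * dist x y" .
  qed simp
  then have "ereal \<bar>(\<integral>w. u \<bullet> w \<partial>\<mu>) - (\<integral>w. u \<bullet> w \<partial>\<nu>)\<bar> \<le> W1 \<mu> \<nu>"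
    by (rule abs_integral_diff_le_W1) (use assms in auto)
  moreover have "(\<integral>w. u \<bullet> w \<partial>\<mu>) - (\<integral>w. u \<bullet> w \<partial>\<nu>) = u \<bullet> d"
    using assms(1,2) by (simp add: d_def inner_diff_right)
  moreover have "u \<bullet> d = norm d"
    by (cases "d = 0") (simp_all add: u_def dot_square_norm power2_eq_square)
  ultimately have "ereal (norm d) \<le> W1 \<mu> \<nu>"
    by simp
  then have "ereal (norm d) \<le> ereal c"
    using W1_le by (rule order_trans)
  then show ?thesis
    by (simp add: d_def)
qed

definition mcshane_extension :: "real \<Rightarrow> 'a set \<Rightarrow> ('a::metric_space \<Rightarrow> real) \<Rightarrow> 'a \<Rightarrow> real" where
  "mcshane_extension K Z h x = Inf ((\<lambda>w. h w + K * dist x w) ` Z)"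

lemma mcshane_extension_le:
  fixes h :: "'a::metric_space \<Rightarrow> real"
  assumes lip: "K-lipschitz_on Z h" and "w \<in> Z"
  shows "mcshane_extension K Z h x \<le> h w + K * dist x w"
  unfolding mcshane_extension_def
proof (rule cInf_lower)
  have "0 \<le> K"
    using lip by (rule lipschitz_on_nonneg)
  show "bdd_below ((\<lambda>w. h w + K * dist x w) ` Z)"
  proof (rule bdd_belowI2)
    fix w' assume "w' \<in> Z"
    have "h w - h w' \<le> K * dist w w'"
      using lipschitz_onD[OF lip \<open>w \<in> Z\<close> \<open>w' \<in> Z\<close>] by (simp add: dist_real_def)
    also have "\<dots> \<le> K * (dist x w + dist x w')"
      using \<open>0 \<le> K\<close> dist_triangle3[of w w' x] by (simp add: mult_left_mono dist_commute)
    finally show "h w - K * dist x w \<le> h w' + K * dist x w'"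
      by (simp add: algebra_simps)
  qed
qed (use \<open>w \<in> Z\<close> in simp)

lemma mcshane_extension_ge:
  assumes "Z \<noteq> {}" and "\<And>w. w \<in> Z \<Longrightarrow> c \<le> h w + K * dist x w"
  shows "c \<le> mcshane_extension K Z h x"
  unfolding mcshane_extension_def using assms by (intro cInf_greatest) auto

lemma mcshane_extension_eq:
  fixes h :: "'a::metric_space \<Rightarrow> real"
  assumes lip: "K-lipschitz_on Z h" and "z \<in> Z"
  shows "mcshane_extension K Z h z = h z"
proof (rule antisym)
  show "mcshane_extension K Z h z \<le> h z"
    using mcshane_extension_le[OF assms, of z] by simp
  show "h z \<le> mcshane_extension K Z h z"
  proof (rule mcshane_extension_ge)
    show "Z \<noteq> {}"
      using \<open>z \<in> Z\<close> by blast
    fix w assume "w \<in> Z"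
    then show "h z \<le> h w + K * dist z w"
      using lipschitz_onD[OF lip \<open>z \<in> Z\<close> \<open>w \<in> Z\<close>] by (simp add: dist_real_def abs_le_iff)
  qed
qed

lemma lipschitz_on_mcshane_extension:
  fixes h :: "'a::metric_space \<Rightarrow> real"
  assumes lip: "K-lipschitz_on Z h" and "Z \<noteq> {}"
  shows "K-lipschitz_on UNIV (mcshane_extension K Z h)"
proof -
  let ?H = "mcshane_extension K Z h"
  have "0 \<le> K"
    using lip by (rule lipschitz_on_nonneg)
  have increment: "?H x - ?H y \<le> K * dist x y" for x y
  proof -
    have "?H x - K * dist x y \<le> ?H y"
    proof (rule mcshane_extension_ge[OF \<open>Z \<noteq> {}\<close>])
      fix w assume "w \<in> Z"
      have "K * dist x w \<le> K * (dist x y + dist y w)"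
        using \<open>0 \<le> K\<close> dist_triangle[of x w y] by (rule mult_left_mono[rotated])
      then show "?H x - K * dist x y \<le> h w + K * dist y w"
        using mcshane_extension_le[OF lip \<open>w \<in> Z\<close>, of x] by (simp add: algebra_simps)
    qed
    then show ?thesis
      by simp
  qed
  show ?thesis
  proof (rule lipschitz_onI)
    show "dist (?H x) (?H y) \<le> K * dist x y" for x y
      using increment[of x y] increment[of y x] by (simp add: dist_real_def dist_commute abs_le_iff)
  qed fact
qed

lemma integral_eq_if_W1_zero:
  fixes g :: "'a::{metric_space, second_countable_topology} \<Rightarrow> real"
  assumes lip: "K-lipschitz_on UNIV g" and "integrable \<mu> g" and "integrable \<nu> g"
    and "W1 \<mu> \<nu> \<le> 0"
  shows "(\<integral>z. g z \<partial>\<mu>) = (\<integral>z. g z \<partial>\<nu>)"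
proof -
  have "0 \<le> K"
    using lip by (rule lipschitz_on_nonneg)
  have "(inverse (K + 1) * K)-lipschitz_on UNIV (\<lambda>z. inverse (K + 1) * g z)"
    using \<open>0 \<le> K\<close> by (intro lipschitz_on_cmult_real_nonneg[OF lip]) simp
  then have "1-lipschitz_on UNIV (\<lambda>z. inverse (K + 1) * g z)"
    by (rule lipschitz_on_mono) (use \<open>0 \<le> K\<close> in \<open>simp_all add: field_simps\<close>)
  then have "ereal \<bar>(\<integral>z. inverse (K + 1) * g z \<partial>\<mu>) - (\<integral>z. inverse (K + 1) * g z \<partial>\<nu>)\<bar> \<le> W1 \<mu> \<nu>"
    by (rule abs_integral_diff_le_W1) (use assms(2,3) in simp_all)
  also have "\<dots> \<le> 0"
    by fact
  finally show ?thesis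
    using \<open>0 \<le> K\<close> by (simp add: add_nonneg_eq_0_iff)
qed

lemma lipschitz_on_increment:
  fixes l :: "'x::real_inner \<Rightarrow> 'z::real_normed_vector \<Rightarrow> real"
  assumes grad: "\<And>x z. GDERIV (\<lambda>u. l u z) x :> gradl x z"
    and lip: "\<And>x z z'. z \<in> Z \<Longrightarrow> z' \<in> Z \<Longrightarrow> norm (gradl x z - gradl x z') \<le> \<beta> * norm (z - z')"
  shows "(\<bar>\<beta>\<bar> * norm (x1 - x0))-lipschitz_on Z (\<lambda>z. l x1 z - l x0 z)"
proof (rule lipschitz_onI)
  fix z z' assume "z \<in> Z" "z' \<in> Z"
  define d where "d = x1 - x0"
  define \<psi> where "\<psi> s = l (x0 + s *\<^sub>R d) z - l (x0 + s *\<^sub>R d) z'" for s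
  have deriv: "DERIV \<psi> s :> (gradl (x0 + s *\<^sub>R d) z - gradl (x0 + s *\<^sub>R d) z') \<bullet> d" for s
    unfolding \<psi>_def inner_diff_left by (intro DERIV_diff gderiv_along_line grad)
  obtain s where "\<psi> 1 - \<psi> 0 = (gradl (x0 + s *\<^sub>R d) z - gradl (x0 + s *\<^sub>R d) z') \<bullet> d"
    using MVT2[of 0 1 \<psi>, OF _ deriv] by auto
  then have "\<bar>\<psi> 1 - \<psi> 0\<bar> \<le> norm (gradl (x0 + s *\<^sub>R d) z - gradl (x0 + s *\<^sub>R d) z') * norm d"
    by (simp add: Cauchy_Schwarz_ineq2)
  also have "\<dots> \<le> \<bar>\<beta>\<bar> * norm (z - z') * norm d"
    using order_trans[OF lip[OF \<open>z \<in> Z\<close> \<open>z' \<in> Z\<close>] mult_right_mono[OF abs_ge_self norm_ge_zero]]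
    by (rule mult_right_mono) simp
  finally show "dist (l x1 z - l x0 z) (l x1 z' - l x0 z') \<le> \<bar>\<beta>\<bar> * norm (x1 - x0) * dist z z'"
    by (simp add: \<psi>_def d_def dist_real_def dist_norm algebra_simps)
qed simp

lemma integral_eq_of_lipschitz_extension:
  fixes H :: "'a::{metric_space, second_countable_topology} \<Rightarrow> real"
  assumes "K-lipschitz_on UNIV H" and "sets M = sets borel"
    and "AE z in M. z \<in> Z" and "\<And>z. z \<in> Z \<Longrightarrow> H z = g z" and "integrable M g"
  shows "integrable M H" and "(\<integral>z. H z \<partial>M) = (\<integral>z. g z \<partial>M)"
proof -
  have meas: "H \<in> borel_measurable M"
    using borel_measurable_continuous_onI[OF lipschitz_on_continuous_on[OF assms(1)]]
    by (simp add: measurable_cong_sets[OF assms(2) refl])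
  have ae: "AE z in M. g z = H z"
    using assms(3) by (rule AE_mp) (simp add: assms(4))
  show "integrable M H"
    by (rule integrable_cong_AE_imp[OF assms(5) meas ae])
  show "(\<integral>z. H z \<partial>M) = (\<integral>z. g z \<partial>M)"
    using ae by (intro integral_cong_AE[OF meas borel_measurable_integrable[OF assms(5)]]) auto
qed

lemma integral_increment_eq_if_W1_zero:
  fixes l :: "'x::real_inner \<Rightarrow> 'z::euclidean_space \<Rightarrow> real"
  assumes "prob_space \<mu>" and "sets \<mu> = sets borel" and "sets \<nu> = sets borel"
    and AE: "AE z in \<mu>. z \<in> Z" "AE z in \<nu>. z \<in> Z"
    and l_int: "\<And>x. integrable \<mu> (l x)" "\<And>x. integrable \<nu> (l x)"
    and grad: "\<And>x z. GDERIV (\<lambda>u. l u z) x :> gradl x z"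
    and lip: "\<And>x z z'. z \<in> Z \<Longrightarrow> z' \<in> Z \<Longrightarrow> norm (gradl x z - gradl x z') \<le> \<beta> * norm (z - z')"
    and "W1 \<mu> \<nu> \<le> 0"
  shows "(\<integral>z. l x1 z \<partial>\<mu>) - (\<integral>z. l x0 z \<partial>\<mu>) = (\<integral>z. l x1 z \<partial>\<nu>) - (\<integral>z. l x0 z \<partial>\<nu>)"
proof -
  define K where "K = \<bar>\<beta>\<bar> * norm (x1 - x0)"
  define H where "H = mcshane_extension K Z (\<lambda>z. l x1 z - l x0 z)"
  have "Z \<noteq> {}"
    using prob_space.AE_False[OF \<open>prob_space \<mu>\<close>] AE(1) by auto
  have increment_lip: "K-lipschitz_on Z (\<lambda>z. l x1 z - l x0 z)"
    unfolding K_def by (rule lipschitz_on_increment[OF grad lip])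
  have H: "K-lipschitz_on UNIV H"
    unfolding H_def using increment_lip \<open>Z \<noteq> {}\<close> by (rule lipschitz_on_mcshane_extension)
  have H_eq: "H z = l x1 z - l x0 z" if "z \<in> Z" for z
    unfolding H_def using increment_lip that by (rule mcshane_extension_eq)
  note \<mu>_ext = integral_eq_of_lipschitz_extension[OF H assms(2) AE(1) H_eq]
  note \<nu>_ext = integral_eq_of_lipschitz_extension[OF H assms(3) AE(2) H_eq]
  have "(\<integral>z. H z \<partial>\<mu>) = (\<integral>z. H z \<partial>\<nu>)"
    using \<mu>_ext(1) \<nu>_ext(1) l_int by (intro integral_eq_if_W1_zero[OF H _ _ \<open>W1 \<mu> \<nu> \<le> 0\<close>]) simp_all
  then show ?thesis
    using \<mu>_ext(2) \<nu>_ext(2) l_int by simp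
qed

lemma nonneg_of_W1_lipschitz:
  fixes M :: "'a::euclidean_space \<Rightarrow> 'b::{metric_space, second_countable_topology} measure"
  assumes "\<And>x y. W1 (M x) (M y) \<le> ereal (c * norm (x - y))"
  shows "0 \<le> c"
proof -
  obtain e :: 'a where "e \<in> Basis"
    using nonempty_Basis by blast
  then show ?thesis
    using order_trans[OF W1_nonneg assms[of e 0]] by simp
qed

section \<open>Saddle points from dual optimality\<close>

lemma nonpos_if_le_linear_at_right:
  fixes c K :: real
  assumes "\<forall>\<^sub>F s in at_right 0. c \<le> K * s"
  shows "c \<le> 0"
proof -
  have "((\<lambda>s. K * s) \<longlongrightarrow> K * 0) (at_right 0)"
    by (intro tendsto_intros)
  then show ?thesis
    using assms by (intro tendsto_le[of "at_right 0" "\<lambda>s. K * s" 0 "\<lambda>_. c"]) simp_all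
qed

lemma lagrangian_eq_tilted:
  fixes G :: "real^'n^'w"
  shows "F u + v \<bullet> (G *v u - c) = F u + (transpose G *v v) \<bullet> u - v \<bullet> c"
  by (simp only: inner_diff_right inner_transpose_mult add_diff_eq)

lemma dual_value_at_tilted_minimizer:
  fixes G :: "real^'n^'w"
  assumes "tilted_minimizer F (transpose G *v v) y"
  shows "(INF u. F u + v \<bullet> (G *v u - c)) = F y + v \<bullet> (G *v y - c)"
  using assms unfolding tilted_minimizer_def lagrangian_eq_tilted
  by (intro cInf_eq_minimum) auto

lemma tilted_minimizer_dual_lipschitz:
  fixes F :: "real^'n \<Rightarrow> real" and G :: "real^'n^'w"
  assumes "quadratic_sandwich \<gamma> \<beta> F" and "0 < \<gamma>"
    and "tilted_minimizer F (transpose G *v v1) y1" and "tilted_minimizer F (transpose G *v v2) y2"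
  shows "norm (y1 - y2) \<le> sigma_max G / \<gamma> * norm (v1 - v2)"
proof -
  have "\<gamma> * norm (y1 - y2) \<le> norm (transpose G *v (v1 - v2))"
    using tilted_minimizer_lipschitz[OF assms] by (simp add: matrix_vector_mult_diff_distrib)
  also have "\<dots> \<le> sigma_max G * norm (v1 - v2)"
    by (rule norm_transpose_mult_le_sigma_max)
  finally show ?thesis
    using \<open>0 < \<gamma>\<close> by (simp add: field_simps)
qed

lemma dual_axis_shift_slope:
  fixes F :: "real^'n \<Rightarrow> real" and G :: "real^'n^'w" and y :: "real^'w \<Rightarrow> real^'n"
  assumes y: "\<And>v. tilted_minimizer F (transpose G *v v) (y v)"
    and no_ascent: "(INF u. F u + (lams + s *\<^sub>R axis i 1) \<bullet> (G *v u - c)) \<le> (INF u. F u + lams \<bullet> (G *v u - c))"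
  shows "s * (G *v y (lams + s *\<^sub>R axis i 1) - c) $ i \<le> 0"
proof -
  define v where "v = lams + s *\<^sub>R axis i 1"
  have "F (y v) + lams \<bullet> (G *v y v - c) + s * (G *v y v - c) $ i = F (y v) + v \<bullet> (G *v y v - c)"
    by (simp add: v_def inner_add_left inner_axis')
  also have "\<dots> = (INF u. F u + v \<bullet> (G *v u - c))"
    by (rule dual_value_at_tilted_minimizer[OF y, symmetric])
  also have "\<dots> \<le> (INF u. F u + lams \<bullet> (G *v u - c))"
    using no_ascent by (simp add: v_def)
  also have "\<dots> = F (y lams) + lams \<bullet> (G *v y lams - c)"
    by (rule dual_value_at_tilted_minimizer[OF y])
  also have "\<dots> \<le> F (y v) + lams \<bullet> (G *v y v - c)"
    using y[of lams, unfolded tilted_minimizer_def, rule_format, of "y v"]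
    by (simp add: lagrangian_eq_tilted)
  finally show ?thesis
    by (simp add: v_def)
qed

lemma dual_axis_shift_residual:
  fixes F :: "real^'n \<Rightarrow> real" and G :: "real^'n^'w" and y :: "real^'w \<Rightarrow> real^'n"
  assumes sandwich: "quadratic_sandwich \<gamma> \<beta> F" and "0 < \<gamma>"
    and y: "\<And>v. tilted_minimizer F (transpose G *v v) (y v)"
    and no_ascent: "(INF u. F u + (lams + s *\<^sub>R axis i 1) \<bullet> (G *v u - c)) \<le> (INF u. F u + lams \<bullet> (G *v u - c))"
  defines "r v \<equiv> (G *v y v - c) $ i"
  shows "s * r (lams + s *\<^sub>R axis i 1) \<le> 0"
    and "\<bar>r lams - r (lams + s *\<^sub>R axis i 1)\<bar> \<le> (sigma_max G)\<^sup>2 / \<gamma> * \<bar>s\<bar>"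
proof -
  show "s * r (lams + s *\<^sub>R axis i 1) \<le> 0"
    unfolding r_def by (rule dual_axis_shift_slope[OF y no_ascent])
  have "\<bar>r lams - r (lams + s *\<^sub>R axis i 1)\<bar> \<le> norm (G *v (y lams - y (lams + s *\<^sub>R axis i 1)))"
    using component_le_norm_cart[of "G *v (y lams - y (lams + s *\<^sub>R axis i 1))" i]
    by (simp add: r_def matrix_vector_mult_diff_distrib)
  also have "\<dots> \<le> sigma_max G * norm (y lams - y (lams + s *\<^sub>R axis i 1))"
    by (rule norm_mult_le_sigma_max)
  also have "\<dots> \<le> sigma_max G * (sigma_max G / \<gamma> * \<bar>s\<bar>)"
    using tilted_minimizer_dual_lipschitz[OF sandwich \<open>0 < \<gamma>\<close> y y, of lams "lams + s *\<^sub>R axis i 1"]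
    by (intro mult_left_mono sigma_max_nonneg) simp_all
  finally show "\<bar>r lams - r (lams + s *\<^sub>R axis i 1)\<bar> \<le> (sigma_max G)\<^sup>2 / \<gamma> * \<bar>s\<bar>"
    by (simp add: power2_eq_square)
qed

lemma nonneg_add_axis:
  fixes v :: "real^'w"
  assumes "0 \<le> v" and "0 \<le> v $ i + s"
  shows "0 \<le> v + s *\<^sub>R axis i 1"
  using assms unfolding less_eq_vec_def by (auto simp: axis_def)

text \<open>Along the axis \<open>e\<^sub>i\<close> the dual function has slope \<open>(G y(\<lambda>) - c)\<^sub>i\<close>, so its maximality on
  \<open>\<lambda> \<ge> 0\<close> yields primal feasibility and complementary slackness.\<close>

lemma dual_optimum_kkt:
  fixes F :: "real^'n \<Rightarrow> real" and G :: "real^'n^'w" and y :: "real^'w \<Rightarrow> real^'n"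
  assumes sandwich: "quadratic_sandwich \<gamma> \<beta> F" and "0 < \<gamma>"
    and y: "\<And>v. tilted_minimizer F (transpose G *v v) (y v)"
    and lams_nonneg: "0 \<le> lams"
    and lams_opt: "\<And>v. 0 \<le> v \<Longrightarrow> (INF u. F u + v \<bullet> (G *v u - c)) \<le> (INF u. F u + lams \<bullet> (G *v u - c))"
  shows "G *v y lams \<le> c" and "\<And>i. 0 < lams $ i \<Longrightarrow> (G *v y lams) $ i = c $ i"
proof -
  define K where "K = (sigma_max G)\<^sup>2 / \<gamma>"
  define r where "r v i = (G *v y v - c) $ i" for v i
  note residual = dual_axis_shift_residual[OF sandwich \<open>0 < \<gamma>\<close> y lams_opt, folded K_def r_def]
  have feasible: "r lams i \<le> 0" for i
  proof (rule nonpos_if_le_linear_at_right)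
    show "\<forall>\<^sub>F s in at_right 0. r lams i \<le> K * s"
      using eventually_at_right_real[OF zero_less_one]
    proof (rule eventually_mono)
      fix s :: real assume "s \<in> {0<..<1}"
      then have "0 \<le> lams + s *\<^sub>R axis i 1"
        using lams_nonneg by (intro nonneg_add_axis) (auto simp: less_eq_vec_def)
      from residual[OF this] \<open>s \<in> {0<..<1}\<close> show "r lams i \<le> K * s"
        by (auto simp: mult_le_0_iff abs_le_iff)
    qed
  qed
  have slack: "- r lams i \<le> 0" if "0 < lams $ i" for i
  proof (rule nonpos_if_le_linear_at_right)
    show "\<forall>\<^sub>F s in at_right 0. - r lams i \<le> K * s"
      using eventually_at_right_real[OF that]
    proof (rule eventually_mono)
      fix s :: real assume "s \<in> {0<..<lams $ i}"
      then have "0 \<le> lams + (- s) *\<^sub>R axis i 1"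
        using lams_nonneg by (intro nonneg_add_axis) auto
      from residual[OF this] \<open>s \<in> {0<..<lams $ i}\<close> show "- r lams i \<le> K * s"
        by (auto simp: mult_le_0_iff zero_le_mult_iff abs_le_iff)
    qed
  qed
  show "G *v y lams \<le> c"
    using feasible by (simp add: less_eq_vec_def r_def)
  show "(G *v y lams) $ i = c $ i" if "0 < lams $ i" for i
    using feasible[of i] slack[OF that] by (simp add: r_def)
qed

lemma saddle_point_of_dual_optimum:
  fixes F :: "real^'n \<Rightarrow> real" and G :: "real^'n^'w"
  assumes sandwich: "quadratic_sandwich \<gamma> \<beta> F" and "0 < \<gamma>"
    and lams_nonneg: "0 \<le> lams"
    and lams_opt: "\<And>v. 0 \<le> v \<Longrightarrow> (INF u. F u + v \<bullet> (G *v u - c)) \<le> (INF u. F u + lams \<bullet> (G *v u - c))"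
    and xs_feasible: "G *v xs \<le> c" and xs_opt: "\<And>u. G *v u \<le> c \<Longrightarrow> F xs \<le> F u"
  shows "tilted_minimizer F (transpose G *v lams) xs" and "\<And>i. 0 < lams $ i \<Longrightarrow> (G *v xs) $ i = c $ i"
proof -
  have "\<forall>v. \<exists>y. tilted_minimizer F (transpose G *v v) y"
    using tilted_minimizer_exists[OF sandwich \<open>0 < \<gamma>\<close>] by metis
  then obtain y where y: "\<And>v. tilted_minimizer F (transpose G *v v) (y v)"
    by metis
  note kkt = dual_optimum_kkt[OF sandwich \<open>0 < \<gamma>\<close> y lams_nonneg lams_opt]
  have "lams \<bullet> (G *v y lams - c) = 0"
    unfolding inner_vec_def inner_real_def
    using kkt(2) lams_nonneg by (intro sum.neutral ballI) (force simp: less_eq_vec_def order_le_less)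
  moreover have "lams \<bullet> (G *v xs - c) \<le> 0"
    using xs_feasible lams_nonneg unfolding inner_vec_def less_eq_vec_def
    by (auto intro!: sum_nonpos mult_nonneg_nonpos)
  ultimately have "F xs + lams \<bullet> (G *v xs - c) \<le> F (y lams) + lams \<bullet> (G *v y lams - c)"
    using xs_opt[OF kkt(1)] by simp
  moreover have "F (y lams) + lams \<bullet> (G *v y lams - c) + \<gamma> / 2 * (norm (xs - y lams))\<^sup>2
      \<le> F xs + lams \<bullet> (G *v xs - c)"
    using tilted_minimizer_growth[OF sandwich y, of lams xs] by (simp add: lagrangian_eq_tilted)
  ultimately have "\<gamma> / 2 * (norm (xs - y lams))\<^sup>2 \<le> 0"
    by linarith
  then have "xs = y lams"
    using \<open>0 < \<gamma>\<close> by (simp add: mult_le_0_iff)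
  then show "tilted_minimizer F (transpose G *v lams) xs" and "\<And>i. 0 < lams $ i \<Longrightarrow> (G *v xs) $ i = c $ i"
    using y kkt(2) by simp_all
qed

lemma pos_part_fixed_point:
  fixes lams :: "real^'w"
  assumes "0 \<le> lams" and "G *v xs \<le> c" and "\<And>i. 0 < lams $ i \<Longrightarrow> (G *v xs) $ i = c $ i" and "0 \<le> \<eta>"
  shows "pos_part (lams + \<eta> *\<^sub>R (G *v xs - c)) = lams"
  unfolding vec_eq_iff
proof
  fix i
  show "pos_part (lams + \<eta> *\<^sub>R (G *v xs - c)) $ i = lams $ i"
  proof (cases "lams $ i = 0")
    case True
    have "\<eta> * ((G *v xs) $ i - c $ i) \<le> 0"
      using assms(2,4) by (simp add: less_eq_vec_def mult_nonneg_nonpos)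
    then show ?thesis
      using True by (simp add: pos_part_def)
  next
    case False
    have "0 \<le> lams $ i"
      using assms(1) by (simp add: less_eq_vec_def)
    with False have "0 < lams $ i"
      by simp
    then show ?thesis
      using assms(3)[of i] by (simp add: pos_part_def)
  qed
qed

lemma pos_part_nonexpansive: "norm (pos_part a - pos_part b) \<le> norm (a - b)"
proof -
  have "(max (a $ i) 0 - max (b $ i) 0)\<^sup>2 \<le> (a $ i - b $ i)\<^sup>2" for i
    unfolding abs_le_square_iff[symmetric] by (simp add: max_def abs_if)
  then have "(pos_part a - pos_part b) \<bullet> (pos_part a - pos_part b) \<le> (a - b) \<bullet> (a - b)"
    unfolding inner_vec_def inner_real_def pos_part_def
    by (intro sum_mono) (simp add: power2_eq_square)
  then show ?thesis
    by (simp add: norm_le)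
qed

section \<open>One step of dual ascent\<close>

lemma norm_dual_step_sq:
  fixes D u e :: "'a::real_inner"
  shows "(norm (D + \<eta> *\<^sub>R u - \<eta> *\<^sub>R e))\<^sup>2 = (norm D)\<^sup>2 + \<eta>\<^sup>2 * (norm u)\<^sup>2 + \<eta>\<^sup>2 * (norm e)\<^sup>2
     + 2 * \<eta> * (D \<bullet> u) - 2 * \<eta> * (D \<bullet> e) - 2 * \<eta>\<^sup>2 * (u \<bullet> e)"
  by (simp only: power2_norm_eq_inner)
    (simp add: inner_add_left inner_add_right inner_diff_left inner_diff_right inner_commute
      algebra_simps power2_eq_square)

lemma neg_two_inner_le:
  fixes x e :: "'a::real_inner"
  assumes "norm x \<le> p * A" and "norm e \<le> \<epsilon>g * k * A" and "0 \<le> p" and "0 \<le> \<epsilon>g" and "0 \<le> A"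
  shows "- 2 * (x \<bullet> e) \<le> p * (\<epsilon>g * (1 + k\<^sup>2)) * A\<^sup>2"
proof -
  have "- (x \<bullet> e) \<le> norm x * norm e"
    using Cauchy_Schwarz_ineq2[of x e] by simp
  also have "\<dots> \<le> (p * A) * (\<epsilon>g * k * A)"
    using assms(1,2) by (rule mult_mono) (simp_all add: assms(3,5))
  finally have "- 2 * (x \<bullet> e) \<le> (p * A\<^sup>2) * (\<epsilon>g * (2 * k))"
    by (simp add: power2_eq_square algebra_simps)
  also have "\<dots> \<le> (p * A\<^sup>2) * (\<epsilon>g * (1 + k\<^sup>2))"
    using zero_le_power2[of "1 - k"] assms(3,4)
    by (intro mult_left_mono) (simp_all add: power2_diff)
  finally show ?thesis
    by (simp add: algebra_simps)
qed

lemma dual_step_contraction: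
  fixes D u e :: "'a::real_inner"
  assumes descent: "D \<bullet> u \<le> - \<gamma>d * (norm D)\<^sup>2"
    and u_bound: "norm u \<le> Ld * norm D"
    and e_bound: "norm e \<le> \<epsilon>g * k * norm D"
    and "0 \<le> \<epsilon>g" and "0 \<le> Ld" and "0 \<le> \<eta>"
  shows "(norm (D + \<eta> *\<^sub>R u - \<eta> *\<^sub>R e))\<^sup>2 \<le> (1 - 2 * \<eta> * \<gamma>d + \<eta>\<^sup>2 * Ld\<^sup>2 + \<epsilon>g * \<eta> + \<epsilon>g * Ld * \<eta>\<^sup>2
      + k\<^sup>2 * (\<epsilon>g\<^sup>2 * \<eta>\<^sup>2 + \<epsilon>g * \<eta> + \<epsilon>g * Ld * \<eta>\<^sup>2)) * (norm D)\<^sup>2"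
proof -
  define A where "A = norm D"
  have "\<eta>\<^sup>2 * (norm u)\<^sup>2 \<le> \<eta>\<^sup>2 * (Ld\<^sup>2 * A\<^sup>2)"
    using power_mono[OF u_bound norm_ge_zero, of 2]
    by (intro mult_left_mono) (simp_all add: A_def power_mult_distrib)
  moreover have "\<eta>\<^sup>2 * (norm e)\<^sup>2 \<le> \<eta>\<^sup>2 * (\<epsilon>g\<^sup>2 * k\<^sup>2 * A\<^sup>2)"
    using power_mono[OF e_bound norm_ge_zero, of 2]
    by (intro mult_left_mono) (simp_all add: A_def power_mult_distrib)
  moreover have "\<eta> * (- 2 * (D \<bullet> e)) \<le> \<eta> * (1 * (\<epsilon>g * (1 + k\<^sup>2)) * A\<^sup>2)"
    using neg_two_inner_le[of D 1 A e \<epsilon>g k] e_bound \<open>0 \<le> \<epsilon>g\<close> \<open>0 \<le> \<eta>\<close>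
    by (intro mult_left_mono) (simp_all add: A_def)
  moreover have "\<eta>\<^sup>2 * (- 2 * (u \<bullet> e)) \<le> \<eta>\<^sup>2 * (Ld * (\<epsilon>g * (1 + k\<^sup>2)) * A\<^sup>2)"
    using neg_two_inner_le[of u Ld A e \<epsilon>g k] u_bound e_bound \<open>0 \<le> \<epsilon>g\<close> \<open>0 \<le> Ld\<close>
    by (intro mult_left_mono) (simp_all add: A_def)
  moreover have "\<eta> * (D \<bullet> u) \<le> \<eta> * (- \<gamma>d * A\<^sup>2)"
    unfolding A_def using descent by (rule mult_left_mono) (simp add: \<open>0 \<le> \<eta>\<close>)
  ultimately have "(norm (D + \<eta> *\<^sub>R u - \<eta> *\<^sub>R e))\<^sup>2 \<le> A\<^sup>2 + \<eta>\<^sup>2 * (Ld\<^sup>2 * A\<^sup>2) + \<eta>\<^sup>2 * (\<epsilon>g\<^sup>2 * k\<^sup>2 * A\<^sup>2)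
      + 2 * (\<eta> * (- \<gamma>d * A\<^sup>2)) + \<eta> * (1 * (\<epsilon>g * (1 + k\<^sup>2)) * A\<^sup>2)
      + \<eta>\<^sup>2 * (Ld * (\<epsilon>g * (1 + k\<^sup>2)) * A\<^sup>2)"
    unfolding norm_dual_step_sq A_def[symmetric] by (simp add: algebra_simps)
  also have "\<dots> = (1 - 2 * \<eta> * \<gamma>d + \<eta>\<^sup>2 * Ld\<^sup>2 + \<epsilon>g * \<eta> + \<epsilon>g * Ld * \<eta>\<^sup>2
      + k\<^sup>2 * (\<epsilon>g\<^sup>2 * \<eta>\<^sup>2 + \<epsilon>g * \<eta> + \<epsilon>g * Ld * \<eta>\<^sup>2)) * A\<^sup>2"
    by (simp add: algebra_simps)
  finally show ?thesis
    by (simp add: A_def)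
qed

text \<open>The forward step \<open>D + \<eta> u\<close> contracts by the factor \<open>1 - \<eta> w\<close>, which exactly absorbs the
  perturbation \<open>\<eta> e\<close>.  The rate for \<open>x\<^sub>t\<^sub>+\<^sub>1\<close> needs this: the step-size condition does not force
  \<open>\<kappa>\<^sub>3 \<le> 1\<close>.\<close>

lemma dual_step_nonexpansive:
  fixes D u e :: "'a::real_inner"
  assumes descent: "D \<bullet> u \<le> - \<gamma>d * (norm D)\<^sup>2"
    and cocoercive: "(norm u)\<^sup>2 \<le> Ld * - (D \<bullet> u)"
    and e_bound: "norm e \<le> w * norm D"
    and "0 \<le> \<eta>" and "\<eta> * Ld \<le> 2" and "\<eta> * w \<le> 1"
    and rate: "1 - \<eta> * \<gamma>d * (2 - \<eta> * Ld) \<le> (1 - \<eta> * w)\<^sup>2"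
  shows "norm (D + \<eta> *\<^sub>R u - \<eta> *\<^sub>R e) \<le> norm D"
proof -
  define A where "A = norm D"
  have "(norm (D + \<eta> *\<^sub>R u))\<^sup>2 = A\<^sup>2 + \<eta>\<^sup>2 * (norm u)\<^sup>2 + 2 * \<eta> * (D \<bullet> u)"
    using norm_dual_step_sq[of D \<eta> u 0] by (simp add: A_def)
  also have "\<dots> \<le> A\<^sup>2 + \<eta> * (2 - \<eta> * Ld) * (D \<bullet> u)"
    using mult_left_mono[OF cocoercive, of "\<eta>\<^sup>2"] by (simp add: power2_eq_square algebra_simps)
  also have "\<dots> \<le> A\<^sup>2 + \<eta> * (2 - \<eta> * Ld) * (- \<gamma>d * A\<^sup>2)"
    using mult_left_mono[OF descent, of "\<eta> * (2 - \<eta> * Ld)"] \<open>0 \<le> \<eta>\<close> \<open>\<eta> * Ld \<le> 2\<close>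
    by (simp add: A_def)
  also have "\<dots> = (1 - \<eta> * \<gamma>d * (2 - \<eta> * Ld)) * A\<^sup>2"
    by (simp add: algebra_simps)
  also have "\<dots> \<le> (1 - \<eta> * w)\<^sup>2 * A\<^sup>2"
    by (rule mult_right_mono[OF rate zero_le_power2])
  also have "\<dots> = ((1 - \<eta> * w) * A)\<^sup>2"
    by (simp only: power_mult_distrib)
  finally have "norm (D + \<eta> *\<^sub>R u) \<le> (1 - \<eta> * w) * A"
    by (rule power2_le_imp_le) (use \<open>\<eta> * w \<le> 1\<close> in \<open>simp add: A_def\<close>)
  moreover have "norm (\<eta> *\<^sub>R e) \<le> \<eta> * (w * A)"
    using e_bound \<open>0 \<le> \<eta>\<close> by (simp add: A_def mult_left_mono)
  ultimately show ?thesis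
    using norm_triangle_ineq4[of "D + \<eta> *\<^sub>R u" "\<eta> *\<^sub>R e"] by (simp add: A_def algebra_simps)
qed

lemma step_size_conditions_of_budget:
  fixes \<gamma>d Ld w \<eta> B :: real
  assumes "0 \<le> w" and "0 < Ld" and "\<gamma>d \<le> Ld" and "0 < \<eta>"
    and budget: "\<eta> * B < 2 * \<gamma>d - 2 * w" and B_ge: "Ld\<^sup>2 + w\<^sup>2 \<le> B"
  shows "\<eta> * Ld \<le> 2" and "\<eta> * w \<le> 1" and "1 - \<eta> * \<gamma>d * (2 - \<eta> * Ld) \<le> (1 - \<eta> * w)\<^sup>2"
proof -
  have \<eta>B: "\<eta> * c \<le> \<eta> * B" if "c \<le> B" for c
    using that \<open>0 < \<eta>\<close> by (simp add: mult_left_mono)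
  have "\<eta> * Ld\<^sup>2 \<le> \<eta> * B"
    using B_ge zero_le_power2[of w] by (intro \<eta>B) linarith
  then have "\<eta> * Ld * Ld < 2 * Ld"
    using budget \<open>0 \<le> w\<close> \<open>\<gamma>d \<le> Ld\<close> unfolding power2_eq_square mult.assoc by linarith
  then show "\<eta> * Ld \<le> 2"
    using \<open>0 < Ld\<close> by simp
  have "\<eta> * (Ld\<^sup>2 + w\<^sup>2) \<le> 2 * Ld - 2 * w"
    using \<eta>B[OF B_ge] budget \<open>\<gamma>d \<le> Ld\<close> by linarith
  then have "w * (\<eta> * (Ld\<^sup>2 + w\<^sup>2)) \<le> w * (2 * Ld - 2 * w)"
    using \<open>0 \<le> w\<close> by (rule mult_left_mono)
  also have "\<dots> = 2 * Ld * w - 2 * w\<^sup>2"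
    by (simp add: power2_eq_square algebra_simps)
  also have "\<dots> \<le> Ld\<^sup>2 + w\<^sup>2"
    using zero_le_power2[of "Ld - w"] zero_le_power2[of w] unfolding power2_diff by linarith
  finally have "(\<eta> * w) * (Ld\<^sup>2 + w\<^sup>2) \<le> 1 * (Ld\<^sup>2 + w\<^sup>2)"
    by (simp add: algebra_simps)
  then show "\<eta> * w \<le> 1"
    by (rule mult_right_le_imp_le) (use \<open>0 < Ld\<close> in \<open>simp add: add_pos_nonneg\<close>)
  have "\<gamma>d * Ld \<le> Ld * Ld"
    using \<open>\<gamma>d \<le> Ld\<close> \<open>0 < Ld\<close> by (simp add: mult_right_mono)
  then have "\<gamma>d * Ld - w\<^sup>2 \<le> B"
    using B_ge zero_le_power2[of w] unfolding power2_eq_square by linarith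
  then have "\<eta> * (\<gamma>d * Ld - w\<^sup>2) \<le> 2 * \<gamma>d - 2 * w"
    using \<eta>B budget by fastforce
  then have "\<eta> * (\<eta> * (\<gamma>d * Ld - w\<^sup>2)) \<le> \<eta> * (2 * \<gamma>d - 2 * w)"
    using \<open>0 < \<eta>\<close> by (simp add: mult_left_mono)
  then show "1 - \<eta> * \<gamma>d * (2 - \<eta> * Ld) \<le> (1 - \<eta> * w)\<^sup>2"
    by (simp add: power2_eq_square algebra_simps)
qed

lemma step_size_conditions:
  fixes \<gamma>d Ld \<epsilon>g k \<eta> :: real
  assumes "0 \<le> \<epsilon>g" and "0 \<le> k" and "\<gamma>d \<le> Ld" and "0 < \<eta>"
    and cond1: "\<epsilon>g * (1 + k\<^sup>2) < 2 * \<gamma>d"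
    and cond2: "\<eta> < (2 * \<gamma>d - \<epsilon>g * (1 + k\<^sup>2)) / (Ld\<^sup>2 + \<epsilon>g * Ld + \<epsilon>g\<^sup>2 * k\<^sup>2 + \<epsilon>g\<^sup>2 * Ld * k\<^sup>2)"
  shows "\<eta> * Ld \<le> 2" and "\<eta> * (\<epsilon>g * k) \<le> 1"
    and "1 - \<eta> * \<gamma>d * (2 - \<eta> * Ld) \<le> (1 - \<eta> * (\<epsilon>g * k))\<^sup>2"
proof -
  define B where "B = Ld\<^sup>2 + \<epsilon>g * Ld + \<epsilon>g\<^sup>2 * k\<^sup>2 + \<epsilon>g\<^sup>2 * Ld * k\<^sup>2"
  have "0 \<le> \<epsilon>g * k"
    using assms(1,2) by simp
  have "0 \<le> \<epsilon>g * (1 + k\<^sup>2)"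
    using \<open>0 \<le> \<epsilon>g\<close> by simp
  then have "0 < Ld"
    using cond1 \<open>\<gamma>d \<le> Ld\<close> by linarith
  have B_ge: "Ld\<^sup>2 + (\<epsilon>g * k)\<^sup>2 \<le> B"
    using \<open>0 \<le> \<epsilon>g\<close> \<open>0 < Ld\<close> by (simp add: B_def power_mult_distrib)
  then have "0 < B"
    using \<open>0 < Ld\<close> zero_le_power2[of "\<epsilon>g * k"] zero_less_power[of Ld 2] by linarith
  then have "\<eta> * B < 2 * \<gamma>d - \<epsilon>g * (1 + k\<^sup>2)"
    using cond2 by (simp add: B_def pos_less_divide_eq mult.commute)
  also have "\<dots> \<le> 2 * \<gamma>d - 2 * (\<epsilon>g * k)"
    using zero_le_power2[of "1 - k"] \<open>0 \<le> \<epsilon>g\<close> mult_left_mono[of "2 * k" "1 + k\<^sup>2" \<epsilon>g]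
    by (simp add: power2_diff)
  finally show "\<eta> * Ld \<le> 2" and "\<eta> * (\<epsilon>g * k) \<le> 1"
    and "1 - \<eta> * \<gamma>d * (2 - \<eta> * Ld) \<le> (1 - \<eta> * (\<epsilon>g * k))\<^sup>2"
    using step_size_conditions_of_budget[OF \<open>0 \<le> \<epsilon>g * k\<close> \<open>0 < Ld\<close> \<open>\<gamma>d \<le> Ld\<close> \<open>0 < \<eta>\<close> _ B_ge] by blast+
qed

lemma contraction_factor_nonneg:
  fixes \<gamma>d Ld \<epsilon>g k \<eta> :: real
  assumes "\<gamma>d \<le> Ld" and "0 \<le> Ld" and "0 \<le> \<epsilon>g" and "0 \<le> \<eta>"
  shows "0 \<le> 1 - 2 * \<eta> * \<gamma>d + \<eta>\<^sup>2 * Ld\<^sup>2 + \<epsilon>g * \<eta> + \<epsilon>g * Ld * \<eta>\<^sup>2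
      + k\<^sup>2 * (\<epsilon>g\<^sup>2 * \<eta>\<^sup>2 + \<epsilon>g * \<eta> + \<epsilon>g * Ld * \<eta>\<^sup>2)"
proof -
  have "0 \<le> (1 - \<eta> * Ld)\<^sup>2"
    by (rule zero_le_power2)
  also have "\<dots> \<le> 1 - 2 * \<eta> * \<gamma>d + \<eta>\<^sup>2 * Ld\<^sup>2"
    using mult_left_mono[OF \<open>\<gamma>d \<le> Ld\<close> \<open>0 \<le> \<eta>\<close>] by (simp add: power2_eq_square algebra_simps)
  finally show ?thesis
    using assms by (simp add: add_nonneg_nonneg)
qed

lemma dual_ascent_step_geometry:
  fixes F :: "real^'n \<Rightarrow> real" and G :: "real^'n^'w" and \<xi> :: "real^'n \<Rightarrow> real^'w"
  assumes sandwich: "quadratic_sandwich \<gamma> \<beta> F" and "0 < \<gamma>"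
    and \<xi>_lip: "\<And>x y. norm (\<xi> x - \<xi> y) \<le> \<epsilon>g * norm (x - y)" and "0 \<le> \<epsilon>g"
    and ys: "tilted_minimizer F (transpose G *v vs) ys" and y: "tilted_minimizer F (transpose G *v v) y"
  defines "D \<equiv> v - vs" and "u \<equiv> G *v (y - ys)" and "e \<equiv> \<xi> y - \<xi> ys"
  shows "D \<bullet> u \<le> - (lambda_min (G ** transpose G) / \<beta>) * (norm D)\<^sup>2"
    and "(norm u)\<^sup>2 \<le> (sigma_max G)\<^sup>2 / \<gamma> * - (D \<bullet> u)"
    and "norm e \<le> \<epsilon>g * (sigma_max G / \<gamma>) * norm D"
proof -
  have "0 < \<beta>"
    using quadratic_sandwich_lower_le_upper[OF sandwich] \<open>0 < \<gamma>\<close> by simp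
  have transposed: "(transpose G *v v - transpose G *v vs) \<bullet> (y - ys) = D \<bullet> u"
    by (simp only: D_def u_def matrix_vector_mult_diff_distrib[symmetric] inner_transpose_mult)
  have GD: "transpose G *v v - transpose G *v vs = transpose G *v D"
    by (simp only: D_def matrix_vector_mult_diff_distrib)
  have "D \<bullet> u \<le> - (norm (transpose G *v D))\<^sup>2 / \<beta>"
    using tilted_minimizer_cocoercive[OF sandwich \<open>0 < \<beta>\<close> y ys, unfolded transposed, unfolded GD]
    by simp
  also have "\<dots> \<le> - (lambda_min (G ** transpose G) * (norm D)\<^sup>2) / \<beta>"
    using lambda_min_rayleigh[of "transpose G" D] \<open>0 < \<beta>\<close> by (simp add: divide_right_mono)
  finally show "D \<bullet> u \<le> - (lambda_min (G ** transpose G) / \<beta>) * (norm D)\<^sup>2"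
    by simp
  have monotone: "\<gamma> * (norm (y - ys))\<^sup>2 \<le> - (D \<bullet> u)"
    using tilted_minimizer_strongly_monotone[OF sandwich y ys, unfolded transposed] .
  have "(norm u)\<^sup>2 \<le> (sigma_max G)\<^sup>2 * (norm (y - ys))\<^sup>2"
    using power_mono[OF norm_mult_le_sigma_max[of G "y - ys"] norm_ge_zero, of 2]
    by (simp add: u_def power_mult_distrib)
  also have "\<dots> \<le> (sigma_max G)\<^sup>2 / \<gamma> * - (D \<bullet> u)"
    using mult_left_mono[OF monotone, of "(sigma_max G)\<^sup>2 / \<gamma>"] \<open>0 < \<gamma>\<close> by simp
  finally show "(norm u)\<^sup>2 \<le> (sigma_max G)\<^sup>2 / \<gamma> * - (D \<bullet> u)" .
  have "norm e \<le> \<epsilon>g * norm (y - ys)"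
    unfolding e_def by (rule \<xi>_lip)
  also have "\<dots> \<le> \<epsilon>g * (sigma_max G / \<gamma> * norm D)"
    using tilted_minimizer_dual_lipschitz[OF sandwich \<open>0 < \<gamma>\<close> y ys] \<open>0 \<le> \<epsilon>g\<close>
    unfolding D_def by (rule mult_left_mono)
  finally show "norm e \<le> \<epsilon>g * (sigma_max G / \<gamma>) * norm D"
    by (simp add: mult.assoc)
qed

lemma norm_le_of_cocoercive:
  fixes D u :: "'a::real_inner"
  assumes "(norm u)\<^sup>2 \<le> L * - (D \<bullet> u)" and "0 \<le> L"
  shows "norm u \<le> L * norm D"
proof -
  have "norm u * norm u \<le> norm u * (L * norm D)"
    using assms(1) mult_left_mono[OF order_trans[OF abs_ge_minus_self Cauchy_Schwarz_ineq2[of D u]] assms(2)]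
    by (simp add: power2_eq_square ac_simps)
  then show ?thesis
    using assms(2) by (cases "u = 0") simp_all
qed

lemma dual_modulus_le_smoothness:
  fixes G :: "real^'n^'w"
  assumes "0 < \<gamma>" and "\<gamma> \<le> \<beta>"
  shows "lambda_min (G ** transpose G) / \<beta> \<le> (sigma_max G)\<^sup>2 / \<gamma>"
proof -
  have "lambda_min (G ** transpose G) / \<beta> \<le> (sigma_max G)\<^sup>2 / \<beta>"
    using lambda_min_le_sigma_max_sq[of G] assms by (simp add: divide_right_mono)
  also have "\<dots> \<le> (sigma_max G)\<^sup>2 / \<gamma>"
    using assms by (simp add: divide_left_mono)
  finally show ?thesis .
qed

lemma dual_ascent_step:
  fixes F :: "real^'n \<Rightarrow> real" and G :: "real^'n^'w" and \<xi> :: "real^'n \<Rightarrow> real^'w"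
  assumes sandwich: "quadratic_sandwich \<gamma> \<beta> F" and "0 < \<gamma>"
    and \<xi>_lip: "\<And>x y. norm (\<xi> x - \<xi> y) \<le> \<epsilon>g * norm (x - y)" and "0 \<le> \<epsilon>g" and "0 < \<eta>"
    and saddle: "tilted_minimizer F (transpose G *v lams) xs"
      "pos_part (lams + \<eta> *\<^sub>R (G *v xs - \<xi> xs)) = lams"
    and y: "tilted_minimizer F (transpose G *v v) y"
    and \<gamma>d_def: "\<gamma>d = lambda_min (G ** transpose G) / \<beta>"
    and Ld_def: "Ld = (sigma_max G)\<^sup>2 / \<gamma>"
    and \<kappa>_def: "\<kappa> = 1 - 2 * \<eta> * \<gamma>d + \<eta>\<^sup>2 * Ld\<^sup>2 + \<epsilon>g * \<eta> + \<epsilon>g * Ld * \<eta>\<^sup>2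
        + (sigma_max G)\<^sup>2 / \<gamma>\<^sup>2 * (\<epsilon>g\<^sup>2 * \<eta>\<^sup>2 + \<epsilon>g * \<eta> + \<epsilon>g * Ld * \<eta>\<^sup>2)"
    and cond1: "\<epsilon>g * (1 + (sigma_max G)\<^sup>2 / \<gamma>\<^sup>2) < 2 * \<gamma>d"
    and cond2: "\<eta> < (2 * \<gamma>d - \<epsilon>g * (1 + (sigma_max G)\<^sup>2 / \<gamma>\<^sup>2)) /
        (Ld\<^sup>2 + \<epsilon>g * Ld + \<epsilon>g\<^sup>2 * (sigma_max G)\<^sup>2 / \<gamma>\<^sup>2 + \<epsilon>g\<^sup>2 * Ld * (sigma_max G)\<^sup>2 / \<gamma>\<^sup>2)"
  defines "v' \<equiv> pos_part (v + \<eta> *\<^sub>R (G *v y - \<xi> y))"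
  shows "(norm (v' - lams))\<^sup>2 \<le> \<kappa> * (norm (v - lams))\<^sup>2"
    and "norm (v' - lams) \<le> norm (v - lams)"
    and "0 \<le> \<kappa>"
proof -
  define k where "k = sigma_max G / \<gamma>"
  define D where "D = v - lams"
  define u where "u = G *v (y - xs)"
  define e where "e = \<xi> y - \<xi> xs"
  have k_sq: "(sigma_max G)\<^sup>2 / \<gamma>\<^sup>2 = k\<^sup>2"
    by (simp add: k_def power_divide)
  have "0 \<le> k" and "0 \<le> Ld"
    using sigma_max_nonneg[of G] \<open>0 < \<gamma>\<close> by (simp_all add: k_def Ld_def)
  have "\<gamma>d \<le> Ld"
    unfolding \<gamma>d_def Ld_def
    using \<open>0 < \<gamma>\<close> quadratic_sandwich_lower_le_upper[OF sandwich] by (rule dual_modulus_le_smoothness)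
  note geometry = dual_ascent_step_geometry[OF sandwich \<open>0 < \<gamma>\<close> \<xi>_lip \<open>0 \<le> \<epsilon>g\<close> saddle(1) y,
      folded D_def u_def e_def \<gamma>d_def Ld_def k_def]
  have "\<eta> < (2 * \<gamma>d - \<epsilon>g * (1 + k\<^sup>2)) / (Ld\<^sup>2 + \<epsilon>g * Ld + \<epsilon>g\<^sup>2 * k\<^sup>2 + \<epsilon>g\<^sup>2 * Ld * k\<^sup>2)"
    using cond2 by (simp only: k_sq[symmetric] times_divide_eq_right)
  note conditions = step_size_conditions[OF \<open>0 \<le> \<epsilon>g\<close> \<open>0 \<le> k\<close> \<open>\<gamma>d \<le> Ld\<close> \<open>0 < \<eta>\<close>
      cond1[unfolded k_sq] this]
  have "(v + \<eta> *\<^sub>R (G *v y - \<xi> y)) - (lams + \<eta> *\<^sub>R (G *v xs - \<xi> xs)) = D + \<eta> *\<^sub>R u - \<eta> *\<^sub>R e"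
    by (simp add: D_def u_def e_def matrix_vector_mult_diff_distrib algebra_simps)
  then have step: "norm (v' - lams) \<le> norm (D + \<eta> *\<^sub>R u - \<eta> *\<^sub>R e)"
    using pos_part_nonexpansive unfolding v'_def by (metis saddle(2))
  have "(norm (D + \<eta> *\<^sub>R u - \<eta> *\<^sub>R e))\<^sup>2 \<le> \<kappa> * (norm D)\<^sup>2"
    using dual_step_contraction[OF geometry(1) norm_le_of_cocoercive[OF geometry(2) \<open>0 \<le> Ld\<close>] geometry(3)]
      \<open>0 \<le> \<epsilon>g\<close> \<open>0 \<le> Ld\<close> \<open>0 < \<eta>\<close> by (simp add: \<kappa>_def k_sq)
  with power_mono[OF step norm_ge_zero, of 2]
  show "(norm (v' - lams))\<^sup>2 \<le> \<kappa> * (norm (v - lams))\<^sup>2"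
    unfolding D_def by (rule order_trans)
  have "norm (D + \<eta> *\<^sub>R u - \<eta> *\<^sub>R e) \<le> norm D"
    using \<open>0 < \<eta>\<close> by (intro dual_step_nonexpansive[OF geometry(1,2,3) _ conditions]) simp
  with step show "norm (v' - lams) \<le> norm (v - lams)"
    unfolding D_def by (rule order_trans)
  show "0 \<le> \<kappa>"
    unfolding \<kappa>_def k_sq using \<open>\<gamma>d \<le> Ld\<close> \<open>0 \<le> Ld\<close> \<open>0 \<le> \<epsilon>g\<close> \<open>0 < \<eta>\<close>
    by (intro contraction_factor_nonneg) simp_all
qed

section \<open>Linear convergence of repeated dual ascent\<close>

lemma geometric_rates:
  fixes a b :: "nat \<Rightarrow> real"
  assumes "0 \<le> \<kappa>" and step: "\<And>t. 1 \<le> t \<Longrightarrow> a (Suc t) \<le> \<kappa> * a t \<and> a (Suc t) \<le> a t"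
    and "0 \<le> K" and coupled: "\<And>t. 1 \<le> t \<Longrightarrow> b (Suc t) \<le> K * a (Suc t)"
  shows "a (Suc t) \<le> \<kappa> ^ t * a 1" and "1 \<le> t \<Longrightarrow> b (Suc t) \<le> \<kappa> ^ (t - 1) * K * a 1"
proof -
  show decay: "a (Suc t) \<le> \<kappa> ^ t * a 1" for t
  proof (induction t)
    case (Suc t)
    have "a (Suc (Suc t)) \<le> \<kappa> * a (Suc t)"
      using step[of "Suc t"] by simp
    also have "\<dots> \<le> \<kappa> * (\<kappa> ^ t * a 1)"
      using Suc.IH \<open>0 \<le> \<kappa>\<close> by (rule mult_left_mono)
    finally show ?case
      by (simp add: mult.assoc)
  qed simp
  assume "1 \<le> t"
  then obtain s where t: "t = Suc s"
    by (cases t) auto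
  have "b (Suc t) \<le> K * a (Suc t)"
    using coupled \<open>1 \<le> t\<close> by simp
  also have "\<dots> \<le> K * a t"
    using step[OF \<open>1 \<le> t\<close>] \<open>0 \<le> K\<close> by (simp add: mult_left_mono)
  also have "\<dots> \<le> K * (\<kappa> ^ s * a 1)"
    using decay[of s] \<open>0 \<le> K\<close> by (simp add: t mult_left_mono)
  finally show "b (Suc t) \<le> \<kappa> ^ (t - 1) * K * a 1"
    by (simp add: t algebra_simps)
qed

lemma dual_ascent_rates:
  fixes F :: "real^'n \<Rightarrow> real" and G :: "real^'n^'w" and \<xi> :: "real^'n \<Rightarrow> real^'w"
    and x :: "nat \<Rightarrow> real^'n" and lam :: "nat \<Rightarrow> real^'w"
  assumes sandwich: "quadratic_sandwich \<gamma> \<beta> F" and "0 < \<gamma>"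
    and \<xi>_lip: "\<And>x y. norm (\<xi> x - \<xi> y) \<le> \<epsilon>g * norm (x - y)" and "0 \<le> \<epsilon>g" and "0 < \<eta>"
    and saddle: "tilted_minimizer F (transpose G *v lams) xs"
      "pos_part (lams + \<eta> *\<^sub>R (G *v xs - \<xi> xs)) = lams"
    and x_min: "\<And>t. 1 \<le> t \<Longrightarrow> tilted_minimizer F (transpose G *v lam t) (x t)"
    and lam_step: "\<And>t. 1 \<le> t \<Longrightarrow> lam (Suc t) = pos_part (lam t + \<eta> *\<^sub>R (G *v x t - \<xi> (x t)))"
    and \<gamma>d_def: "\<gamma>d = lambda_min (G ** transpose G) / \<beta>"
    and Ld_def: "Ld = (sigma_max G)\<^sup>2 / \<gamma>"
    and \<kappa>_def: "\<kappa> = 1 - 2 * \<eta> * \<gamma>d + \<eta>\<^sup>2 * Ld\<^sup>2 + \<epsilon>g * \<eta> + \<epsilon>g * Ld * \<eta>\<^sup>2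
        + (sigma_max G)\<^sup>2 / \<gamma>\<^sup>2 * (\<epsilon>g\<^sup>2 * \<eta>\<^sup>2 + \<epsilon>g * \<eta> + \<epsilon>g * Ld * \<eta>\<^sup>2)"
    and cond1: "\<epsilon>g * (1 + (sigma_max G)\<^sup>2 / \<gamma>\<^sup>2) < 2 * \<gamma>d"
    and cond2: "\<eta> < (2 * \<gamma>d - \<epsilon>g * (1 + (sigma_max G)\<^sup>2 / \<gamma>\<^sup>2)) /
        (Ld\<^sup>2 + \<epsilon>g * Ld + \<epsilon>g\<^sup>2 * (sigma_max G)\<^sup>2 / \<gamma>\<^sup>2 + \<epsilon>g\<^sup>2 * Ld * (sigma_max G)\<^sup>2 / \<gamma>\<^sup>2)"
  shows "\<forall>t\<ge>1. (norm (lam (Suc t) - lams))\<^sup>2 \<le> \<kappa> ^ t * (norm (lam 1 - lams))\<^sup>2 \<and>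
               (norm (x (Suc t) - xs))\<^sup>2 \<le> \<kappa> ^ (t - 1) * ((sigma_max G)\<^sup>2 / \<gamma>\<^sup>2) * (norm (lam 1 - lams))\<^sup>2"
proof -
  note step = dual_ascent_step[OF sandwich \<open>0 < \<gamma>\<close> \<xi>_lip \<open>0 \<le> \<epsilon>g\<close> \<open>0 < \<eta>\<close> saddle x_min
      \<gamma>d_def Ld_def \<kappa>_def cond1 cond2]
  have lam_contraction: "(norm (lam (Suc t) - lams))\<^sup>2 \<le> \<kappa> * (norm (lam t - lams))\<^sup>2 \<and>
      (norm (lam (Suc t) - lams))\<^sup>2 \<le> (norm (lam t - lams))\<^sup>2" if "1 \<le> t" for t
    using step(1,2)[OF that] power_mono[OF step(2)[OF that] norm_ge_zero, of 2]
    by (simp add: lam_step[OF that])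
  have x_close: "norm (x (Suc t) - xs) \<le> sigma_max G / \<gamma> * norm (lam (Suc t) - lams)" for t
    using tilted_minimizer_dual_lipschitz[OF sandwich \<open>0 < \<gamma>\<close> x_min saddle(1)] by simp
  have "(norm (x (Suc t) - xs))\<^sup>2 \<le> (sigma_max G)\<^sup>2 / \<gamma>\<^sup>2 * (norm (lam (Suc t) - lams))\<^sup>2" for t
    using power_mono[OF x_close[of t] norm_ge_zero, of 2] by (simp only: power_mult_distrib power_divide)
  then show ?thesis
    using geometric_rates[of \<kappa> "\<lambda>t. (norm (lam t - lams))\<^sup>2" "(sigma_max G)\<^sup>2 / \<gamma>\<^sup>2" "\<lambda>t. (norm (x t - xs))\<^sup>2"]
      step(3)[of 1] lam_contraction by simp
qed

theorem corollary2:
  fixes G :: "real^'n^'w"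
    and l :: "real^'n \<Rightarrow> real^'z \<Rightarrow> real"
    and gradl :: "real^'n \<Rightarrow> real^'z \<Rightarrow> real^'n"
    and Z :: "(real^'z) set" and W :: "(real^'w) set"
    and D :: "real^'n \<Rightarrow> (real^'z) measure"
    and Dg :: "real^'n \<Rightarrow> (real^'w) measure"
    and f :: "real^'n \<Rightarrow> real^'n \<Rightarrow> real"
    and \<xi> :: "real^'n \<Rightarrow> real^'w"
    and Lag :: "real^'n \<Rightarrow> real^'n \<Rightarrow> real^'w \<Rightarrow> real"
    and d :: "real^'n \<Rightarrow> real^'w \<Rightarrow> real"
    and \<gamma> \<beta>x \<beta>z \<epsilon> \<epsilon>g \<eta> \<gamma>d Ld \<kappa>3 :: real
    and x ybar :: "nat \<Rightarrow> real^'n" and lam :: "nat \<Rightarrow> real^'w"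
    and xs :: "real^'n" and lams :: "real^'w"
  assumes C2: "C2 (\<lambda>p :: (real^'n) \<times> (real^'z). l (fst p) (snd p))"
    and grad: "\<And>x z. GDERIV (\<lambda>u. l u z) x :> gradl x z"
    and D_prob: "\<And>x. prob_space (D x)" "\<And>x. sets (D x) = sets borel"
      "\<And>x. AE z in D x. z \<in> Z"
    and Dg_prob: "\<And>x. prob_space (Dg x)" "\<And>x. sets (Dg x) = sets borel"
      "\<And>x. AE w in Dg x. w \<in> W"
    and l_int: "\<And>x x'. integrable (D x') (l x)"
    and w_int: "\<And>x'. integrable (Dg x') (\<lambda>w. w)"
    and f_def: "\<And>x' x. f x' x = (\<integral>z. l x z \<partial>D x')"
    and \<xi>_def: "\<And>x'. \<xi> x' = (\<integral>w. w \<partial>Dg x')"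
    and Lag_def: "\<And>x' x v. Lag x' x v = f x' x + v \<bullet> (G *v x - \<xi> x')"
    and d_def: "\<And>x' v. d x' v = (INF x. Lag x' x v)"
    and eps0: "\<epsilon> = 0"
    and A1: "\<gamma> > 0" "\<And>z. z \<in> Z \<Longrightarrow> strongly_convex \<gamma> (\<lambda>x. l x z)"
    and A2z: "\<And>x z z'. z \<in> Z \<Longrightarrow> z' \<in> Z \<Longrightarrow> norm (gradl x z - gradl x z') \<le> \<beta>z * norm (z - z')"
    and A2x: "\<And>x y z. z \<in> Z \<Longrightarrow> norm (gradl x z - gradl y z) \<le> \<beta>x * norm (x - y)"
    and A3: "\<And>x y. W1 (D x) (D y) \<le> ereal (\<epsilon> * norm (x - y))"
      "\<And>x y. W1 (Dg x) (Dg y) \<le> ereal (\<epsilon>g * norm (x - y))"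
    and A4: "rank G = CARD('w)"
    and eq_feas: "G *v xs \<le> \<xi> xs"
    and eq_opt: "\<And>x. G *v x \<le> \<xi> xs \<Longrightarrow> f xs xs \<le> f xs x"
    and lams_nonneg: "0 \<le> lams"
    and lams_opt: "\<And>v. 0 \<le> v \<Longrightarrow> d xs v \<le> d xs lams"
    and eta_pos: "\<eta> > 0"
    and rda_x: "\<And>t u. t \<ge> 1 \<Longrightarrow> Lag (x (t - 1)) (x t) (lam t) \<le> Lag (x (t - 1)) u (lam t)"
    and rda_y: "\<And>t u. t \<ge> 1 \<Longrightarrow> Lag (x t) (ybar t) (lam t) \<le> Lag (x t) u (lam t)"
    and rda_lam: "\<And>t. t \<ge> 1 \<Longrightarrow> lam (Suc t) = pos_part (lam t + \<eta> *\<^sub>R (G *v ybar t - \<xi> (x t)))"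
    and \<gamma>d_def: "\<gamma>d = lambda_min (G ** transpose G) / \<beta>x"
    and Ld_def: "Ld = (sigma_max G)\<^sup>2 / \<gamma>"
    and \<kappa>3_def: "\<kappa>3 = 1 - 2 * \<eta> * \<gamma>d + \<eta>\<^sup>2 * Ld\<^sup>2 + \<epsilon>g * \<eta> + \<epsilon>g * Ld * \<eta>\<^sup>2
        + (sigma_max G)\<^sup>2 / \<gamma>\<^sup>2 * (\<epsilon>g\<^sup>2 * \<eta>\<^sup>2 + \<epsilon>g * \<eta> + \<epsilon>g * Ld * \<eta>\<^sup>2)"
    and cond1: "\<epsilon>g * (1 + (sigma_max G)\<^sup>2 / \<gamma>\<^sup>2) < 2 * \<gamma>d"
    and cond2: "\<eta> < (2 * \<gamma>d - \<epsilon>g * (1 + (sigma_max G)\<^sup>2 / \<gamma>\<^sup>2)) /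
        (Ld\<^sup>2 + \<epsilon>g * Ld + \<epsilon>g\<^sup>2 * (sigma_max G)\<^sup>2 / \<gamma>\<^sup>2 + \<epsilon>g\<^sup>2 * Ld * (sigma_max G)\<^sup>2 / \<gamma>\<^sup>2)"
  shows "\<forall>t\<ge>1. (norm (lam (Suc t) - lams))\<^sup>2 \<le> \<kappa>3 ^ t * (norm (lam 1 - lams))\<^sup>2 \<and>
               (norm (x (Suc t) - xs))\<^sup>2 \<le> \<kappa>3 ^ (t - 1) * ((sigma_max G)\<^sup>2 / \<gamma>\<^sup>2) * (norm (lam 1 - lams))\<^sup>2"
proof -
  define F where "F = f xs"
  have "0 \<le> \<epsilon>g"
    by (rule nonneg_of_W1_lipschitz[OF A3(2)])
  have \<xi>_lip: "\<And>x y. norm (\<xi> x - \<xi> y) \<le> \<epsilon>g * norm (x - y)"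
    unfolding \<xi>_def by (rule norm_mean_diff_le_W1[OF w_int w_int A3(2)])
  have f_shift: "f x' u = F u + (f x' 0 - F 0)" for x' u
    using integral_increment_eq_if_W1_zero[OF D_prob(1) D_prob(2) D_prob(2) D_prob(3) D_prob(3) l_int l_int grad A2z,
        of x' xs u 0] A3(1)[of x' xs]
    by (simp add: F_def f_def eps0 zero_ereal_def)
  have sandwich: "quadratic_sandwich \<gamma> \<beta>x F"
    unfolding F_def f_def
    by (rule quadratic_sandwich_expectation[OF D_prob(1) D_prob(3) l_int grad A1(2) A2x less_imp_le[OF A1(1)]])
  have lag: "Lag x' u v = F u + v \<bullet> (G *v u - \<xi> xs) + (f x' 0 - F 0 + v \<bullet> (\<xi> xs - \<xi> x'))" for x' u v
    using f_shift[of x' u] by (simp add: Lag_def inner_diff_right)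
  have lag_min: "tilted_minimizer F (transpose G *v v) y" if "\<And>u. Lag x' y v \<le> Lag x' u v" for x' y v
    using that unfolding tilted_minimizer_def lag lagrangian_eq_tilted by simp
  have "(INF u. Lag xs u v) = (INF u. F u + v \<bullet> (G *v u - \<xi> xs))" for v
    by (simp add: Lag_def F_def)
  then obtain saddle: "tilted_minimizer F (transpose G *v lams) xs"
    and slack: "\<And>i. 0 < lams $ i \<Longrightarrow> (G *v xs) $ i = \<xi> xs $ i"
    using saddle_point_of_dual_optimum[OF sandwich A1(1) lams_nonneg _ eq_feas] lams_opt eq_opt
    by (metis F_def d_def)
  have fixed: "pos_part (lams + \<eta> *\<^sub>R (G *v xs - \<xi> xs)) = lams"
    using pos_part_fixed_point[OF lams_nonneg eq_feas slack] eta_pos by simp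
  have x_min: "tilted_minimizer F (transpose G *v lam t) (x t)" and "ybar t = x t" if "1 \<le> t" for t
    using lag_min[OF rda_x[OF that]] lag_min[OF rda_y[OF that]] tilted_minimizer_unique[OF sandwich A1(1)]
    by blast+
  with rda_lam show ?thesis
    by (intro dual_ascent_rates[OF sandwich A1(1) \<xi>_lip \<open>0 \<le> \<epsilon>g\<close> eta_pos saddle fixed x_min _
          \<gamma>d_def Ld_def \<kappa>3_def cond1 cond2]) simp_all
qed

end
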